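(* Let $F$ satisfy the standing assumptions below, $\lambda>0$, $\varepsilon>0$ with $\varepsilon\le\frac72(G+\sigma)$, and $\Delta_F:=F(\mathbf{x}_0)-\inf_{\mathbf{x}}F(\mathbf{x})<\infty$. Consider the anchoring scheme: set $\mathbf{a}_1=\mathbf{x}_0$; for $n=1,\dots,N$, run the general conversion scheme below for $T$ iterations starting from $\mathbf{x}^{(n)}_0=\mathbf{w}^{(n)}_0=\mathbf{a}_n$ with the choice $\mathbf{x}^{(n)}_t=\mathbf{a}_n$ for all $t\in[T]$, producing iterates $\mathbf{x}^{(n)}_t,\mathbf{w}^{(n)}_t,\mathbf{y}^{(n)}_t$, and then sample $\mathbf{a}_{n+1}$ uniformly at random from $\{\mathbf{w}^{(n)}_t\}_{t=1}^T$. In each epoch use an online learner satisfying, for all $t\in[T]$ and all comparators $\mathbf{u}$ (deterministic or depending on the run), $\mathbb{E}[\mathrm{Regret}^\beta_t(\mathbf{u})]\le\frac{2\|\mathbf{u}\|(G+\sigma)}{\beta\sqrt{1-\beta}}+\frac\mu2\|\mathbf{u}\|^2$, with $\beta=1-\left(\frac{\varepsilon}{7(G+\sigma)}\right)^2$ and $\mu=2\lambda^{1/2}\varepsilon^{1/2}$. If $N\ge4\Delta_F\lambda^{1/2}\varepsilon^{-3/2}$ and $T\ge49(G+\sigma)^2\varepsilon^{-2}$, then $$\mathbb{E}_{n\sim\mathrm{Unif}([N])}\,\mathbb{E}_\tau\|\nabla F(\overline{\mathbf{y}}^{(n)}_\tau)\|_\lambda\le4\varepsilon,$$ where $\overlin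e{\mathbf{y}}^{(n)}_t:=\frac{1-\beta}{1-\beta^t}\sum_{s=1}^t\beta^{t-s}\mathbf{y}^{(n)}_s$.
   Context: Norms are Euclidean. Standing assumptions: $F:\mathbb{R}^d\to\mathbb{R}$ differentiable; for all $\mathbf{x},\mathbf{w}$, $F(\mathbf{x})-F(\mathbf{w})=\int_0^1\langle\nabla F(\mathbf{w}+t(\mathbf{x}-\mathbf{w})),\mathbf{x}-\mathbf{w}\rangle\,dt$; $\|\nabla F\|\le G$ everywhere. The stochastic gradient oracle at $\mathbf{x}$ independently returns $\mathbf{g}$ with $\mathbb{E}\mathbf{g}=\nabla F(\mathbf{x})$, $\mathbb{E}\|\mathbf{g}-\nabla F(\mathbf{x})\|^2\le\sigma^2$. $\|\nabla F(\mathbf{x})\|_\lambda := \inf\{\|\mathbb{E}_{\mathbf{w}\sim p}\nabla F(\mathbf{w})\|+\lambda\mathbb{E}_{\mathbf{w}\sim p}\|\mathbf{w}-\mathbf{x}\|^2\}$ over probability distributions $p$ on $\mathbb{R}^d$ with mean $\mathbf{x}$. General conversion scheme: input $\mathbf{x}_0=\mathbf{w}_0$, $T$, $\mu\ge0$, online learner $\mathcal{A}$ (output $\Delta_t$ at round $t$ based on $\ell_1,\dots,\ell_{t-1}$). For $t=1,\dots,T$: receive $\Delta_t$; choose $\mathbf{x}_t$; $\mathbf{w}_t=\mathbf{x}_t+\Delta_t$; $\mathbf{y}_t=\mathbf{x}_t+s_t\Delta_t$, $s_t\sim\mathrm{Unif}[0,1]$ i.i.d.; $\mathbf{g}_t$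 = oracle output at $\mathbf{y}_t$; send $\ell_t(\mathbf{v})=\langle\mathbf{g}_t,\mathbf{v}\rangle+\frac\mu2\|\mathbf{v}\|^2$ to $\mathcal{A}$. $\mathrm{Regret}^\beta_t(\mathbf{u}) := \sum_{s=1}^t\beta^{t-s}(\ell_s(\Delta_s)-\ell_s(\mathbf{u}))$. $\tau$ is independent of everything with $\Pr(\tau=t)=\frac{1-\beta^t}{T}$ ($t\le T-1$), $\Pr(\tau=T)=\frac{1-\beta^T}{(1-\beta)T}$; $\mathbb{E}_\tau$ is expectation over $\tau$ and all algorithmic randomness. *)

theory Defs
  imports "HOL-Probability.Probability"
begin

text \<open>Gradient-norm surrogate: the infimum over Borel probability distributions p on the
space with mean x of  norm (E_p gradF) + lam * E_p (norm (w - x))^2.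
Distributions with infinite second moment contribute +infinity and are omitted.\<close>
definition lambda_norm :: "('a::euclidean_space \<Rightarrow> 'a) \<Rightarrow> real \<Rightarrow> 'a \<Rightarrow> real" where
  "lambda_norm gF lam x =
     Inf {norm (\<integral>w. gF w \<partial>p) + lam * (\<integral>w. (norm (w - x))\<^sup>2 \<partial>p) | p.
            prob_space p \<and> sets p = sets borel \<and> integrable p (\<lambda>w. w) \<and> (\<integral>w. w \<partial>p) = x
            \<and> integrable p gF \<and> integrable p (\<lambda>w. (norm (w - x))\<^sup>2)}"

text \<open>Anchors: a_1 = x0, a_(n+1) = w^(n)_(J_n) = a_n + D n (J_n) (index 0 is unused).\<close>
fun anchor :: "'a::real_vector \<Rightarrow> (nat \<Rightarrow> nat \<Rightarrow> 'b \<Rightarrow> 'a) \<Rightarrow> (nat \<Rightarrow> 'b \<Rightarrow> nat) \<Rightarrow> nat \<Rightarrow> 'b \<Rightarrow> 'a" where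
  "anchor x0 D J 0 \<omega> = x0"
| "anchor x0 D J (Suc 0) \<omega> = x0"
| "anchor x0 D J (Suc (Suc n)) \<omega> = anchor x0 D J (Suc n) \<omega> + D (Suc n) (J (Suc n) \<omega>) \<omega>"

definition iter_y :: "'a::real_vector \<Rightarrow> (nat \<Rightarrow> nat \<Rightarrow> 'b \<Rightarrow> 'a) \<Rightarrow> (nat \<Rightarrow> nat \<Rightarrow> 'b \<Rightarrow> real)
    \<Rightarrow> (nat \<Rightarrow> 'b \<Rightarrow> nat) \<Rightarrow> nat \<Rightarrow> nat \<Rightarrow> 'b \<Rightarrow> 'a" where
  "iter_y x0 D s J n t \<omega> = anchor x0 D J n \<omega> + s n t \<omega> *\<^sub>R D n t \<omega>"

definition ybar :: "real \<Rightarrow> 'a::real_vector \<Rightarrow> (nat \<Rightarrow> nat \<Rightarrow> 'b \<Rightarrow> 'a) \<Rightarrow> (nat \<Rightarrow> nat \<Rightarrow> 'b \<Rightarrow> real)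
    \<Rightarrow> (nat \<Rightarrow> 'b \<Rightarrow> nat) \<Rightarrow> nat \<Rightarrow> nat \<Rightarrow> 'b \<Rightarrow> 'a" where
  "ybar \<beta> x0 D s J n t \<omega> =
     ((1 - \<beta>) / (1 - \<beta> ^ t)) *\<^sub>R (\<Sum>r = 1..t. \<beta> ^ (t - r) *\<^sub>R iter_y x0 D s J n r \<omega>)"

definition loss :: "real \<Rightarrow> 'a::real_inner \<Rightarrow> 'a \<Rightarrow> real" where
  "loss \<mu> gv v = gv \<bullet> v + \<mu> / 2 * (norm v)\<^sup>2"

definition regret :: "real \<Rightarrow> real \<Rightarrow> (nat \<Rightarrow> nat \<Rightarrow> 'b \<Rightarrow> 'a::real_inner) \<Rightarrow> (nat \<Rightarrow> nat \<Rightarrow> 'b \<Rightarrow> 'a)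
    \<Rightarrow> nat \<Rightarrow> nat \<Rightarrow> ('b \<Rightarrow> 'a) \<Rightarrow> 'b \<Rightarrow> real" where
  "regret \<beta> \<mu> g D n t u \<omega> =
     (\<Sum>r = 1..t. \<beta> ^ (t - r) * (loss \<mu> (g n r \<omega>) (D n r \<omega>) - loss \<mu> (g n r \<omega>) (u \<omega>)))"

definition tau_prob :: "real \<Rightarrow> nat \<Rightarrow> nat \<Rightarrow> real" where
  "tau_prob \<beta> T t = (if t < T then (1 - \<beta> ^ t) / real T else (1 - \<beta> ^ T) / ((1 - \<beta>) * real T))"

end

theory Submission
  imports Defs
begin

text \<open>Within an epoch the anchor a is fixed and the query points are y_t = a + s_t D_t with s_t
  uniform on [0,1] and independent of the past, so that E[F(a + D_t) - F(a)] = E<g_t, D_t>.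
  The lambda-norm at the averaged query point is witnessed by the empirical distribution of the
  y_t; it is therefore bounded by the norm of the discounted gradient sum, the noise (whose terms
  are orthogonal), and lambda times the spread of the D_t. Testing the discounted regret against the
  comparator of norm sqrt(epsilon/lambda) opposite to the discounted gradient sum bounds the first
  and last of these by the regret bound minus the discounted progress sum of E<g_t, D_t>.
  Averaging over tau turns the discounted progress sums into the plain sum over the epoch, i.e. into
  the expected decrease of F, which telescopes over the epochs because the next anchor is a
  uniformly sampled iterate independent of the epoch.\<close>

lemma (in prob_space) indep_var_if_indep_set_vimage:
  assumes sub: "subalgebra M Fa" and X: "X \<in> measurable Fa S" and Y: "Y \<in> measurable M T"
    and f: "f \<in> measurable T S'"
    and ind: "indep_set (sets Fa) (sets (vimage_algebra (space M) Y T))"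
  shows "indep_var S X S' (\<lambda>\<omega>. f (Y \<omega>))"
proof -
  have sp: "space Fa = space M" using sub by (simp add: subalgebra_def)
  have X_sets: "sigma_sets (space M) {X -` A \<inter> space M | A. A \<in> sets S} \<subseteq> sets Fa"
    unfolding sp[symmetric] by (rule sets.sigma_sets_subset) (auto intro: measurable_sets[OF X])
  have "{(\<lambda>\<omega>. f (Y \<omega>)) -` A \<inter> space M | A. A \<in> sets S'} \<subseteq> sets (vimage_algebra (space M) Y T)"
  proof safe
    fix A assume A: "A \<in> sets S'"
    have "(\<lambda>\<omega>. f (Y \<omega>)) -` A \<inter> space M = Y -` (f -` A \<inter> space T) \<inter> space M"
      using measurable_space[OF Y] by auto
    then show "(\<lambda>\<omega>. f (Y \<omega>)) -` A \<inter> space M \<in> sets (vimage_algebra (space M) Y T)"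
      by (metis in_vimage_algebra measurable_sets[OF f A])
  qed
  then have fY_sets: "sigma_sets (space M) {(\<lambda>\<omega>. f (Y \<omega>)) -` A \<inter> space M | A. A \<in> sets S'}
      \<subseteq> sets (vimage_algebra (space M) Y T)"
    using sets.sigma_sets_subset[of _ "vimage_algebra (space M) Y T"] by simp
  have "indep_set (sigma_sets (space M) {X -` A \<inter> space M | A. A \<in> sets S})
                  (sigma_sets (space M) {(\<lambda>\<omega>. f (Y \<omega>)) -` A \<inter> space M | A. A \<in> sets S'})"
    using ind unfolding indep_set_def
    by (rule indep_sets_mono_sets) (use X_sets fY_sets in \<open>auto split: bool.split\<close>)
  moreover have "(\<lambda>\<omega>. f (Y \<omega>)) \<in> measurable M S'" using f Y by measurable
  ultimately show ?thesis
    unfolding indep_var_eq using measurable_from_subalg[OF sub X] by auto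
qed

lemma (in prob_space) distr_pair_eq_pair_measure_if_indep_set:
  assumes sub: "subalgebra M Fa" and X: "X \<in> measurable Fa S" and Y: "Y \<in> measurable M T"
    and ind: "indep_set (sets Fa) (sets (vimage_algebra (space M) Y T))"
  shows "distr M (S \<Otimes>\<^sub>M T) (\<lambda>x. (X x, Y x)) = distr M S X \<Otimes>\<^sub>M distr M T Y"
proof -
  have X_M: "X \<in> measurable M S" using measurable_from_subalg[OF sub X] .
  have sp: "space Fa = space M" using sub by (simp add: subalgebra_def)
  let ?S = "distr M S X" and ?T = "distr M T Y" and ?J = "distr M (S \<Otimes>\<^sub>M T) (\<lambda>x. (X x, Y x))"
  have XY: "(\<lambda>x. (X x, Y x)) \<in> measurable M (S \<Otimes>\<^sub>M T)" using X_M Y by (rule measurable_Pair)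
  interpret S: prob_space ?S by (rule prob_space_distr) fact
  interpret T: prob_space ?T by (rule prob_space_distr) fact
  interpret ST: pair_prob_space ?S ?T ..
  show ?thesis
  proof (rule pair_measure_eqI[symmetric])
    fix A B assume A: "A \<in> sets ?S" and B: "B \<in> sets ?T"
    have A': "X -` A \<inter> space M \<in> sets Fa" using measurable_sets[OF X, of A] A sp by simp
    have B': "Y -` B \<inter> space M \<in> sets (vimage_algebra (space M) Y T)"
      using B by (auto simp: sets_vimage_algebra intro!: sigma_sets.Basic)
    have "emeasure ?J (A \<times> B) = emeasure M ((X -` A \<inter> space M) \<inter> (Y -` B \<inter> space M))"
      using A B by (subst emeasure_distr[OF XY]) (auto intro!: arg_cong[where f="emeasure M"])
    also have "\<dots> = emeasure M (X -` A \<inter> space M) * emeasure M (Y -` B \<inter> space M)"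
      using indep_setD[OF ind A' B'] by (simp add: emeasure_eq_measure measure_nonneg ennreal_mult)
    also have "\<dots> = emeasure ?S A * emeasure ?T B"
      using X_M Y A B by (simp add: emeasure_distr)
    finally show "emeasure ?S A * emeasure ?T B = emeasure ?J (A \<times> B)" by simp
  qed (simp_all add: S.sigma_finite_measure T.sigma_finite_measure)
qed

lemma measurable_mono_subalgebra:
  assumes "subalgebra M F1" "subalgebra M F2" "sets F1 \<subseteq> sets F2" "f \<in> measurable F1 X"
  shows "f \<in> measurable F2 X"
proof -
  have "subalgebra F2 F1" using assms(1-3) by (auto simp: subalgebra_def)
  then show ?thesis using measurable_from_subalg assms(4) by blast
qed

lemma integrable_bounded_by_norm_product:
  fixes f h :: "'m \<Rightarrow> 'v::real_normed_vector" and k :: "'m \<Rightarrow> real"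
  assumes "integrable M (\<lambda>x. (norm (f x))\<^sup>2)" "integrable M (\<lambda>x. (norm (h x))\<^sup>2)"
    and "k \<in> borel_measurable M"
    and "\<And>x. x \<in> space M \<Longrightarrow> \<bar>k x\<bar> \<le> norm (f x) * norm (h x)"
  shows "integrable M k"
proof (rule Bochner_Integration.integrable_bound[OF _ assms(3)])
  show "integrable M (\<lambda>x. (norm (f x))\<^sup>2 + (norm (h x))\<^sup>2)" using assms(1,2) by auto
  show "AE x in M. norm (k x) \<le> norm ((norm (f x))\<^sup>2 + (norm (h x))\<^sup>2)"
  proof (rule AE_I2)
    fix x assume "x \<in> space M"
    have "2 * (norm (f x) * norm (h x)) \<le> (norm (f x))\<^sup>2 + (norm (h x))\<^sup>2"
      by (rule sum_squares_bound[of "norm (f x)" "norm (h x)", simplified mult.assoc])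
    then have "norm (f x) * norm (h x) \<le> (norm (f x))\<^sup>2 + (norm (h x))\<^sup>2"
      using mult_nonneg_nonneg[OF norm_ge_zero norm_ge_zero, of "f x" "h x"] by linarith
    then show "norm (k x) \<le> norm ((norm (f x))\<^sup>2 + (norm (h x))\<^sup>2)"
      using assms(4)[OF \<open>x \<in> space M\<close>] by auto
  qed
qed

lemma (in prob_space) integral_norm_le_sqrt_integral_norm_sq:
  fixes X :: "'a \<Rightarrow> 'v::euclidean_space"
  assumes X: "X \<in> borel_measurable M" and sq: "integrable M (\<lambda>x. (norm (X x))\<^sup>2)"
  shows "integrable M (\<lambda>x. norm (X x))" "(\<integral>x. norm (X x) \<partial>M) \<le> sqrt (\<integral>x. (norm (X x))\<^sup>2 \<partial>M)"
proof -
  show i: "integrable M (\<lambda>x. norm (X x))"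
    by (rule square_integrable_imp_integrable) (use X sq in auto)
  define m where "m = (\<integral>x. norm (X x) \<partial>M)"
  have "0 \<le> (\<integral>x. (norm (X x) - m)\<^sup>2 \<partial>M)" by simp
  also have "\<dots> = (\<integral>x. (norm (X x))\<^sup>2 - 2 * m * norm (X x) + m\<^sup>2 \<partial>M)"
    by (simp add: power2_diff algebra_simps)
  also have "\<dots> = (\<integral>x. (norm (X x))\<^sup>2 \<partial>M) - m\<^sup>2"
    using i sq by (simp add: prob_space m_def power2_eq_square)
  finally have "m\<^sup>2 \<le> (\<integral>x. (norm (X x))\<^sup>2 \<partial>M)" by simp
  then show "(\<integral>x. norm (X x) \<partial>M) \<le> sqrt (\<integral>x. (norm (X x))\<^sup>2 \<partial>M)"
    using real_le_rsqrt m_def by blast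
qed

lemma (in prob_space) integral_inner_eq_if_cond_exp_eq:
  fixes g V Z :: "'a \<Rightarrow> 'v::euclidean_space"
  assumes sub: "subalgebra M Fy"
    and V: "V \<in> borel_measurable Fy" and g: "g \<in> borel_measurable M" and Z: "Z \<in> borel_measurable M"
    and g_sq: "integrable M (\<lambda>\<omega>. (norm (g \<omega>))\<^sup>2)" and V_sq: "integrable M (\<lambda>\<omega>. (norm (V \<omega>))\<^sup>2)"
    and Z_sq: "integrable M (\<lambda>\<omega>. (norm (Z \<omega>))\<^sup>2)"
    and ce: "\<And>b. b \<in> Basis \<Longrightarrow> AE \<omega> in M. real_cond_exp M Fy (\<lambda>\<omega>. g \<omega> \<bullet> b) \<omega> = Z \<omega> \<bullet> b"
  shows "(\<integral>\<omega>. g \<omega> \<bullet> V \<omega> \<partial>M) = (\<integral>\<omega>. Z \<omega> \<bullet> V \<omega> \<partial>M)"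
proof -
  interpret Fy: finite_measure_subalgebra M Fy by unfold_locales (rule sub)
  note measurable_from_subalg[OF sub V, measurable] g[measurable] Z[measurable]
  have integrable_coord: "integrable M (\<lambda>\<omega>. (V \<omega> \<bullet> b) * (W \<omega> \<bullet> b))"
    if "b \<in> Basis" "integrable M (\<lambda>\<omega>. (norm (W \<omega>))\<^sup>2)" "W \<in> borel_measurable M" for b W
    by (rule integrable_bounded_by_norm_product[OF V_sq that(2)])
       (use that Basis_le_norm in \<open>auto simp: abs_mult intro!: mult_mono\<close>)
  have coord: "(\<integral>\<omega>. (V \<omega> \<bullet> b) * (g \<omega> \<bullet> b) \<partial>M) = (\<integral>\<omega>. (V \<omega> \<bullet> b) * (Z \<omega> \<bullet> b) \<partial>M)"
    if b: "b \<in> Basis" for b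
  proof -
    have "(\<lambda>\<omega>. V \<omega> \<bullet> b) \<in> borel_measurable Fy" using V by measurable
    then have "(\<integral>\<omega>. (V \<omega> \<bullet> b) * (g \<omega> \<bullet> b) \<partial>M)
        = (\<integral>\<omega>. (V \<omega> \<bullet> b) * real_cond_exp M Fy (\<lambda>\<omega>. g \<omega> \<bullet> b) \<omega> \<partial>M)"
      using Fy.real_cond_exp_intg(2) integrable_coord[OF b g_sq g] by (simp add: borel_measurable_inner)
    also have "\<dots> = (\<integral>\<omega>. (V \<omega> \<bullet> b) * (Z \<omega> \<bullet> b) \<partial>M)"
      by (rule integral_cong_AE) (use ce[OF b] in auto)
    finally show ?thesis .
  qed
  have "(\<integral>\<omega>. g \<omega> \<bullet> V \<omega> \<partial>M) = (\<Sum>b\<in>Basis. \<integral>\<omega>. (V \<omega> \<bullet> b) * (g \<omega> \<bullet> b) \<partial>M)"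
    using integrable_coord[OF _ g_sq g]
    by (subst euclidean_inner, subst Bochner_Integration.integral_sum[symmetric])
       (auto simp: mult.commute inner_commute)
  also have "\<dots> = (\<Sum>b\<in>Basis. \<integral>\<omega>. (V \<omega> \<bullet> b) * (Z \<omega> \<bullet> b) \<partial>M)"
    using coord by simp
  also have "\<dots> = (\<integral>\<omega>. Z \<omega> \<bullet> V \<omega> \<partial>M)"
    using integrable_coord[OF _ Z_sq Z]
    by (subst (2) euclidean_inner, subst Bochner_Integration.integral_sum[symmetric])
       (auto simp: mult.commute)
  finally show ?thesis .
qed

lemma (in prob_space) integral_at_uniform_index:
  fixes Z :: "nat \<Rightarrow> 'a \<Rightarrow> real" and J :: "'a \<Rightarrow> nat" and W :: "'a \<Rightarrow> real"
  assumes sub: "subalgebra M Fa" and T: "T \<ge> 1"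
    and Z: "\<And>t. t \<in> {1..T} \<Longrightarrow> Z t \<in> borel_measurable Fa"
    and Z_int: "\<And>t. t \<in> {1..T} \<Longrightarrow> integrable M (Z t)"
    and J: "J \<in> measurable M (count_space UNIV)"
    and J_unif: "distr M (count_space UNIV) J = uniform_measure (count_space UNIV) {1..T}"
    and ind: "indep_set (sets Fa) (sets (vimage_algebra (space M) J (count_space UNIV)))"
    and W: "W \<in> borel_measurable M"
    and W_eq: "\<And>\<omega>. \<omega> \<in> space M \<Longrightarrow> J \<omega> \<in> {1..T} \<Longrightarrow> W \<omega> = Z (J \<omega>) \<omega>"
  shows "(\<integral>\<omega>. W \<omega> \<partial>M) = (\<Sum>t=1..T. \<integral>\<omega>. Z t \<omega> \<partial>M) / T"
proof -
  note J[measurable] W[measurable]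
  have Z_M[measurable]: "Z t \<in> borel_measurable M" if "t \<in> {1..T}" for t
    using measurable_from_subalg[OF sub Z[OF that]] .
  have "AE j in uniform_measure (count_space UNIV) {1..T}. j \<in> {1..T}"
    by (rule AE_uniform_measureI) auto
  then have J_range: "AE \<omega> in M. J \<omega> \<in> {1..T}"
    unfolding J_unif[symmetric] by (rule AE_distrD[OF J])
  have prob_J: "(\<integral>\<omega>. of_bool (J \<omega> = t) \<partial>M) = 1 / T" if "t \<in> {1..T}" for t
  proof -
    have "(\<integral>\<omega>. of_bool (J \<omega> = t) \<partial>M) = (\<integral>\<omega>. indicator (J -` {t} \<inter> space M) \<omega> \<partial>M)"
      by (rule Bochner_Integration.integral_cong) (auto simp: indicator_def)
    also have "\<dots> = measure (distr M (count_space UNIV) J) {t}"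
      by (simp add: measure_distr)
    also have "\<dots> = 1 / T"
      using that T by (simp add: J_unif measure_uniform_measure_eq_cond_prob)
    finally show ?thesis .
  qed
  have indep: "indep_var borel (Z t) borel (\<lambda>\<omega>. of_bool (J \<omega> = t) :: real)" if "t \<in> {1..T}" for t
    by (rule indep_var_if_indep_set_vimage[OF sub Z[OF that] J _ ind]) simp
  have indicator_int: "integrable M (\<lambda>\<omega>. of_bool (J \<omega> = t) :: real)" for t
    by (rule integrable_const_bound[where B=1]) auto
  have "(\<integral>\<omega>. W \<omega> \<partial>M) = (\<integral>\<omega>. (\<Sum>t=1..T. Z t \<omega> * of_bool (J \<omega> = t)) \<partial>M)"
  proof (rule integral_cong_AE)
    show "AE \<omega> in M. W \<omega> = (\<Sum>t = 1..T. Z t \<omega> * of_bool (J \<omega> = t))"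
      using J_range by (auto simp: W_eq if_distrib cong: sum.cong)
  qed simp_all
  also have "\<dots> = (\<Sum>t=1..T. (\<integral>\<omega>. Z t \<omega> \<partial>M) * (\<integral>\<omega>. of_bool (J \<omega> = t) \<partial>M))"
    using indep_var_integrable[OF indep Z_int indicator_int]
      indep_var_lebesgue_integral[OF indep Z_int indicator_int]
    by (subst Bochner_Integration.integral_sum) auto
  finally show ?thesis using prob_J by (simp add: sum_divide_distrib)
qed

lemma (in prob_space) integral_norm_sum_orthogonal_sq:
  fixes \<xi> :: "'i \<Rightarrow> 'a \<Rightarrow> 'v::euclidean_space" and w :: "'i \<Rightarrow> real"
  assumes I: "finite I"
    and \<xi>: "\<And>r. r \<in> I \<Longrightarrow> \<xi> r \<in> borel_measurable M"
    and \<xi>_sq: "\<And>r. r \<in> I \<Longrightarrow> integrable M (\<lambda>\<omega>. (norm (\<xi> r \<omega>))\<^sup>2)"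
    and orth: "\<And>r q. r \<in> I \<Longrightarrow> q \<in> I \<Longrightarrow> r \<noteq> q \<Longrightarrow> (\<integral>\<omega>. \<xi> r \<omega> \<bullet> \<xi> q \<omega> \<partial>M) = 0"
  shows "integrable M (\<lambda>\<omega>. (norm (\<Sum>r\<in>I. w r *\<^sub>R \<xi> r \<omega>))\<^sup>2)"
    "(\<integral>\<omega>. (norm (\<Sum>r\<in>I. w r *\<^sub>R \<xi> r \<omega>))\<^sup>2 \<partial>M) = (\<Sum>r\<in>I. (w r)\<^sup>2 * (\<integral>\<omega>. (norm (\<xi> r \<omega>))\<^sup>2 \<partial>M))"
proof -
  have cross_int: "integrable M (\<lambda>\<omega>. w r * w q * (\<xi> r \<omega> \<bullet> \<xi> q \<omega>))" if "r \<in> I" "q \<in> I" for r q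
  proof -
    have "integrable M (\<lambda>\<omega>. \<xi> r \<omega> \<bullet> \<xi> q \<omega>)"
      by (rule integrable_bounded_by_norm_product[OF \<xi>_sq[OF that(1)] \<xi>_sq[OF that(2)]])
         (use \<xi>[OF that(1)] \<xi>[OF that(2)] Cauchy_Schwarz_ineq2 in auto)
    then show ?thesis by simp
  qed
  have sq: "(norm (\<Sum>r\<in>I. w r *\<^sub>R \<xi> r \<omega>))\<^sup>2 = (\<Sum>r\<in>I. \<Sum>q\<in>I. w r * w q * (\<xi> r \<omega> \<bullet> \<xi> q \<omega>))" for \<omega>
    unfolding power2_norm_eq_inner inner_sum_left inner_sum_right
    by (simp add: sum_distrib_left mult.assoc) (subst sum.swap, simp add: mult.left_commute)
  show "integrable M (\<lambda>\<omega>. (norm (\<Sum>r\<in>I. w r *\<^sub>R \<xi> r \<omega>))\<^sup>2)"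
    unfolding sq using cross_int by (intro Bochner_Integration.integrable_sum) auto
  have diagonal: "(\<Sum>q\<in>I. \<integral>\<omega>. w r * w q * (\<xi> r \<omega> \<bullet> \<xi> q \<omega>) \<partial>M)
      = (w r)\<^sup>2 * (\<integral>\<omega>. (norm (\<xi> r \<omega>))\<^sup>2 \<partial>M)" if r: "r \<in> I" for r
  proof -
    have "(\<Sum>q\<in>I. \<integral>\<omega>. w r * w q * (\<xi> r \<omega> \<bullet> \<xi> q \<omega>) \<partial>M)
        = (\<Sum>q\<in>I. if q = r then (w r)\<^sup>2 * (\<integral>\<omega>. (norm (\<xi> r \<omega>))\<^sup>2 \<partial>M) else 0)"
      using orth[OF r] by (intro sum.cong) (auto simp: dot_square_norm power2_eq_square)
    then show ?thesis using r I by simp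
  qed
  have "(\<integral>\<omega>. (norm (\<Sum>r\<in>I. w r *\<^sub>R \<xi> r \<omega>))\<^sup>2 \<partial>M)
      = (\<Sum>r\<in>I. \<Sum>q\<in>I. \<integral>\<omega>. w r * w q * (\<xi> r \<omega> \<bullet> \<xi> q \<omega>) \<partial>M)"
    unfolding sq using cross_int
    by (subst Bochner_Integration.integral_sum, fastforce intro!: Bochner_Integration.integrable_sum)
       (auto intro!: sum.cong Bochner_Integration.integral_sum)
  also have "\<dots> = (\<Sum>r\<in>I. (w r)\<^sup>2 * (\<integral>\<omega>. (norm (\<xi> r \<omega>))\<^sup>2 \<partial>M))"
    using diagonal by (rule sum.cong[OF refl])
  finally show "(\<integral>\<omega>. (norm (\<Sum>r\<in>I. w r *\<^sub>R \<xi> r \<omega>))\<^sup>2 \<partial>M)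
      = (\<Sum>r\<in>I. (w r)\<^sup>2 * (\<integral>\<omega>. (norm (\<xi> r \<omega>))\<^sup>2 \<partial>M))" .
qed

lemma (in prob_space) integral_norm_sum_orthogonal_le:
  fixes \<xi> :: "'i \<Rightarrow> 'a \<Rightarrow> 'v::euclidean_space" and w :: "'i \<Rightarrow> real"
  assumes I: "finite I"
    and \<xi>: "\<And>r. r \<in> I \<Longrightarrow> \<xi> r \<in> borel_measurable M"
    and \<xi>_sq: "\<And>r. r \<in> I \<Longrightarrow> integrable M (\<lambda>\<omega>. (norm (\<xi> r \<omega>))\<^sup>2)"
    and orth: "\<And>r q. r \<in> I \<Longrightarrow> q \<in> I \<Longrightarrow> r \<noteq> q \<Longrightarrow> (\<integral>\<omega>. \<xi> r \<omega> \<bullet> \<xi> q \<omega> \<partial>M) = 0"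
    and var: "\<And>r. r \<in> I \<Longrightarrow> (\<integral>\<omega>. (norm (\<xi> r \<omega>))\<^sup>2 \<partial>M) \<le> \<sigma>\<^sup>2"
    and \<sigma>: "0 \<le> \<sigma>"
  shows "integrable M (\<lambda>\<omega>. norm (\<Sum>r\<in>I. w r *\<^sub>R \<xi> r \<omega>))"
    "(\<integral>\<omega>. norm (\<Sum>r\<in>I. w r *\<^sub>R \<xi> r \<omega>) \<partial>M) \<le> \<sigma> * sqrt (\<Sum>r\<in>I. (w r)\<^sup>2)"
proof -
  have sq_int: "integrable M (\<lambda>\<omega>. (norm (\<Sum>r\<in>I. w r *\<^sub>R \<xi> r \<omega>))\<^sup>2)"
    and sq_eq: "(\<integral>\<omega>. (norm (\<Sum>r\<in>I. w r *\<^sub>R \<xi> r \<omega>))\<^sup>2 \<partial>M)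
      = (\<Sum>r\<in>I. (w r)\<^sup>2 * (\<integral>\<omega>. (norm (\<xi> r \<omega>))\<^sup>2 \<partial>M))"
    using integral_norm_sum_orthogonal_sq[where \<xi>=\<xi> and w=w, OF I \<xi> \<xi>_sq orth] by auto
  have sum_M: "(\<lambda>\<omega>. \<Sum>r\<in>I. w r *\<^sub>R \<xi> r \<omega>) \<in> borel_measurable M"
    by (rule borel_measurable_sum) (use \<xi> in measurable)
  have "(\<Sum>r\<in>I. (w r)\<^sup>2 * (\<integral>\<omega>. (norm (\<xi> r \<omega>))\<^sup>2 \<partial>M)) \<le> (\<Sum>r\<in>I. (w r)\<^sup>2 * \<sigma>\<^sup>2)"
    by (rule sum_mono) (use var in \<open>auto intro!: mult_left_mono\<close>)
  then have "sqrt (\<integral>\<omega>. (norm (\<Sum>r\<in>I. w r *\<^sub>R \<xi> r \<omega>))\<^sup>2 \<partial>M) \<le> sqrt (\<sigma>\<^sup>2 * (\<Sum>r\<in>I. (w r)\<^sup>2))"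
    unfolding sq_eq by (simp add: sum_distrib_left mult.commute)
  also have "\<dots> = \<sigma> * sqrt (\<Sum>r\<in>I. (w r)\<^sup>2)"
    using \<sigma> by (simp add: real_sqrt_mult)
  finally show "integrable M (\<lambda>\<omega>. norm (\<Sum>r\<in>I. w r *\<^sub>R \<xi> r \<omega>))"
    "(\<integral>\<omega>. norm (\<Sum>r\<in>I. w r *\<^sub>R \<xi> r \<omega>) \<partial>M) \<le> \<sigma> * sqrt (\<Sum>r\<in>I. (w r)\<^sup>2)"
    using integral_norm_le_sqrt_integral_norm_sq[OF sum_M sq_int] by linarith+
qed

lemma borel_measurable_gradient:
  fixes F :: "'a::euclidean_space \<Rightarrow> real"
  assumes grad: "\<And>x. (F has_derivative (\<lambda>h. gradF x \<bullet> h)) (at x)"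
  shows "gradF \<in> borel_measurable borel"
proof (subst borel_measurable_euclidean_space, intro ballI)
  fix b :: 'a assume b: "b \<in> Basis"
  have F_cont: "continuous_on UNIV F"
    using grad has_derivative_continuous continuous_at_imp_continuous_on by blast
  show "(\<lambda>x. gradF x \<bullet> b) \<in> borel_measurable borel"
  proof (rule borel_measurable_LIMSEQ_real)
    fix x :: 'a
    have d: "((\<lambda>r. F (x + r *\<^sub>R b)) has_real_derivative (gradF x \<bullet> b)) (at 0)"
    proof -
      have l: "((\<lambda>r::real. x + r *\<^sub>R b) has_derivative (\<lambda>r. r *\<^sub>R b)) (at 0)"
        by (auto intro!: derivative_eq_intros)
      have g0: "(F has_derivative (\<lambda>h. gradF x \<bullet> h)) (at (x + 0 *\<^sub>R b))" using grad by simp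
      from diff_chain_at[OF l g0]
      have "((\<lambda>r. F (x + r *\<^sub>R b)) has_derivative (\<lambda>r. gradF x \<bullet> (r *\<^sub>R b))) (at 0)"
        by (simp add: o_def)
      moreover have "(\<lambda>r. gradF x \<bullet> (r *\<^sub>R b)) = (*) (gradF x \<bullet> b)" by (auto simp: fun_eq_iff)
      ultimately show ?thesis
        by (simp add: has_field_derivative_def)
    qed
    then have lim: "((\<lambda>r. (F (x + r *\<^sub>R b) - F x) / r) \<longlongrightarrow> gradF x \<bullet> b) (at 0)"
      unfolding has_field_derivative_iff by simp
    have s: "(\<lambda>i::nat. 1 / real (Suc i)) \<longlonglongrightarrow> 0"
      using LIMSEQ_Suc[OF lim_const_over_n[of 1]] by simp
    have "filterlim (\<lambda>i::nat. 1 / real (Suc i)) (at 0) sequentially"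
      unfolding filterlim_at using s by (auto intro!: always_eventually)
    from filterlim_compose[OF lim this]
    show "(\<lambda>i. (F (x + (1 / real (Suc i)) *\<^sub>R b) - F x) / (1 / real (Suc i))) \<longlonglongrightarrow> gradF x \<bullet> b"
      by simp
  next
    fix i :: nat
    show "(\<lambda>x. (F (x + (1 / real (Suc i)) *\<^sub>R b) - F x) / (1 / real (Suc i))) \<in> borel_measurable borel"
    proof (intro borel_measurable_continuous_onI continuous_intros)
      show "continuous_on UNIV (\<lambda>x. F (x + (1 / real (Suc i)) *\<^sub>R b))"
        by (rule continuous_on_compose2[OF F_cont]) (auto intro!: continuous_intros)
    qed (use F_cont in auto)
  qed
qed

lemma abs_diff_le_if_gradient_bounded:
  assumes "((\<lambda>t. gradF (w + t *\<^sub>R (x - w)) \<bullet> (x - w)) has_integral (F x - F w)) {0..1}"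
    and "\<And>y. norm (gradF y) \<le> G"
  shows "\<bar>F x - F w\<bar> \<le> G * norm (x - w)"
proof -
  have "norm (F x - F w) \<le> G * norm (x - w) * Henstock_Kurzweil_Integration.content (cbox (0::real) 1)"
  proof (rule has_integral_bound)
    show "0 \<le> G * norm (x - w)" using order_trans[OF norm_ge_zero assms(2)[of x]] by simp
    show "((\<lambda>t. gradF (w + t *\<^sub>R (x - w)) \<bullet> (x - w)) has_integral (F x - F w)) (cbox 0 1)"
      using assms(1) by simp
  next
    fix t :: real
    show "norm (gradF (w + t *\<^sub>R (x - w)) \<bullet> (x - w)) \<le> G * norm (x - w)"
      using Cauchy_Schwarz_ineq2[of "gradF (w + t *\<^sub>R (x - w))" "x - w"] assms(2)
      by (simp add: mult_right_mono order_trans)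
  qed
  then show ?thesis by simp
qed

lemma integral_uniform_measure_01:
  fixes f :: "real \<Rightarrow> real"
  assumes f: "f \<in> borel_measurable borel" and bounded: "\<And>r. \<bar>f r\<bar> \<le> B"
    and I: "(f has_integral I) {0..1}"
  shows "(\<integral>r. f r \<partial>uniform_measure lborel {0..1}) = I"
proof -
  have U: "uniform_measure lborel {0..1::real} = density lborel (\<lambda>r. ennreal (indicator {0..1} r))"
    by (simp add: uniform_measure_def ennreal_indicator divide_ennreal_def)
  have "(\<integral>r. f r \<partial>uniform_measure lborel {0..1}) = (\<integral>r. indicator {0..1} r *\<^sub>R f r \<partial>lborel)"
    unfolding U by (rule integral_density) (use f in auto)
  also have "\<dots> = (LINT r : {0..1} | lborel. f r)"
    by (simp add: set_lebesgue_integral_def)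
  also have "\<dots> = integral {0..1} f"
  proof (rule set_borel_integral_eq_integral)
    show "set_integrable lborel {0..1} f"
      unfolding set_integrable_def
    proof (rule Bochner_Integration.integrable_bound[where f="\<lambda>r. indicator {0..1::real} r *\<^sub>R B"])
      show "integrable lborel (\<lambda>r. indicator {0..1::real} r *\<^sub>R B)"
        by (intro integrable_scaleR_left) (auto simp: integrable_indicator_iff)
      show "(\<lambda>r. indicator {0..1} r *\<^sub>R f r) \<in> borel_measurable lborel" using f by simp
      show "AE x in lborel. norm (indicator {0..1} x *\<^sub>R f x) \<le> norm (indicator {0..1::real} x *\<^sub>R B)"
        using bounded by (auto simp: indicator_def intro!: AE_I2 order_trans[OF _ abs_ge_self])
    qed
  qed
  also have "\<dots> = I" using I by (rule integral_unique)
  finally show ?thesis .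
qed

lemma integral_uniform_directional_derivative:
  fixes gradF :: "'v::euclidean_space \<Rightarrow> 'v"
  assumes gradF: "gradF \<in> borel_measurable borel"
    and ii: "((\<lambda>t. gradF (a + t *\<^sub>R d) \<bullet> d) has_integral (F (a + d) - F a)) {0..1}"
    and bounded: "\<And>x. norm (gradF x) \<le> G"
  shows "(\<integral>r. gradF (a + r *\<^sub>R d) \<bullet> d \<partial>uniform_measure lborel {0..1}) = F (a + d) - F a"
proof (rule integral_uniform_measure_01[OF _ _ ii])
  show "(\<lambda>r. gradF (a + r *\<^sub>R d) \<bullet> d) \<in> borel_measurable borel"
    using gradF by measurable
  show "\<bar>gradF (a + r *\<^sub>R d) \<bullet> d\<bar> \<le> G * norm d" for r
    using Cauchy_Schwarz_ineq2[of "gradF (a + r *\<^sub>R d)" d] bounded[of "a + r *\<^sub>R d"]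
    by (simp add: mult_right_mono order_trans)
qed

lemma (in prob_space) integral_increment_eq_randomized_gradient:
  fixes F :: "'v::euclidean_space \<Rightarrow> real" and gradF :: "'v \<Rightarrow> 'v"
    and a d :: "'a \<Rightarrow> 'v" and s :: "'a \<Rightarrow> real"
  assumes gradF[measurable]: "gradF \<in> borel_measurable borel"
    and F[measurable]: "F \<in> borel_measurable borel"
    and ii: "\<And>x w. ((\<lambda>t. gradF (w + t *\<^sub>R (x - w)) \<bullet> (x - w)) has_integral (F x - F w)) {0..1}"
    and bounded: "\<And>x. norm (gradF x) \<le> G"
    and sub: "subalgebra M Fa" and a: "a \<in> borel_measurable Fa" and d: "d \<in> borel_measurable Fa"
    and s[measurable]: "s \<in> borel_measurable M"
    and s_unif: "distr M borel s = uniform_measure lborel {0..1}"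
    and ind: "indep_set (sets Fa) (sets (vimage_algebra (space M) s borel))"
    and d_int: "integrable M (\<lambda>\<omega>. norm (d \<omega>))"
  shows "integrable M (\<lambda>\<omega>. gradF (a \<omega> + s \<omega> *\<^sub>R d \<omega>) \<bullet> d \<omega>)"
    "(\<integral>\<omega>. F (a \<omega> + d \<omega>) - F (a \<omega>) \<partial>M) = (\<integral>\<omega>. gradF (a \<omega> + s \<omega> *\<^sub>R d \<omega>) \<bullet> d \<omega> \<partial>M)"
proof -
  note measurable_from_subalg[OF sub a, measurable] measurable_from_subalg[OF sub d, measurable]
  define X where "X = (\<lambda>\<omega>. (a \<omega>, d \<omega>))"
  have X: "X \<in> measurable Fa (borel \<Otimes>\<^sub>M borel)" unfolding X_def using a d by (rule measurable_Pair)
  have [measurable]: "X \<in> measurable M (borel \<Otimes>\<^sub>M borel)" using measurable_from_subalg[OF sub X] .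
  define PX where "PX = distr M (borel \<Otimes>\<^sub>M borel) X"
  define PS where "PS = distr M borel s"
  interpret PX: prob_space PX unfolding PX_def by (rule prob_space_distr) simp
  interpret PS: prob_space PS unfolding PS_def by (rule prob_space_distr) simp
  interpret PXS: pair_prob_space PX PS ..
  have joint: "distr M ((borel \<Otimes>\<^sub>M borel) \<Otimes>\<^sub>M borel) (\<lambda>\<omega>. (X \<omega>, s \<omega>)) = PX \<Otimes>\<^sub>M PS"
    unfolding PX_def PS_def by (rule distr_pair_eq_pair_measure_if_indep_set[OF sub X s ind])
  define h where "h p = gradF (fst (fst p) + snd p *\<^sub>R snd (fst p)) \<bullet> snd (fst p)" for p
  have [measurable]: "h \<in> borel_measurable ((borel \<Otimes>\<^sub>M borel) \<Otimes>\<^sub>M borel)"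
    unfolding h_def by measurable
  have h_X: "(\<lambda>\<omega>. h (X \<omega>, s \<omega>)) = (\<lambda>\<omega>. gradF (a \<omega> + s \<omega> *\<^sub>R d \<omega>) \<bullet> d \<omega>)"
    unfolding h_def X_def by simp
  have h_bound: "\<bar>h p\<bar> \<le> G * norm (snd (fst p))" for p
    using Cauchy_Schwarz_ineq2[of "gradF (fst (fst p) + snd p *\<^sub>R snd (fst p))" "snd (fst p)"]
      bounded[of "fst (fst p) + snd p *\<^sub>R snd (fst p)"]
    unfolding h_def by (simp add: mult_right_mono order_trans)
  have "integrable M (\<lambda>\<omega>. h (X \<omega>, s \<omega>))"
  proof (rule Bochner_Integration.integrable_bound[where f="\<lambda>\<omega>. G * norm (d \<omega>)"])
    show "AE \<omega> in M. norm (h (X \<omega>, s \<omega>)) \<le> norm (G * norm (d \<omega>))"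
      using h_bound by (auto simp: X_def intro!: AE_I2 order_trans[OF _ abs_ge_self])
  qed (use d_int in simp_all)
  then show h_int: "integrable M (\<lambda>\<omega>. gradF (a \<omega> + s \<omega> *\<^sub>R d \<omega>) \<bullet> d \<omega>)"
    using h_X by simp
  have "(\<integral>\<omega>. gradF (a \<omega> + s \<omega> *\<^sub>R d \<omega>) \<bullet> d \<omega> \<partial>M) = integral\<^sup>L (PX \<Otimes>\<^sub>M PS) h"
    unfolding h_X[symmetric] joint[symmetric] by (subst integral_distr) auto
  also have "\<dots> = (\<integral>z. (\<integral>r. h (z, r) \<partial>PS) \<partial>PX)"
    using h_int by (intro PXS.integral_fst'[symmetric])
       (simp add: joint[symmetric] integrable_distr_eq h_X[symmetric])
  also have "\<dots> = (\<integral>z. F (fst z + snd z) - F (fst z) \<partial>PX)"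
  proof -
    have "(\<integral>r. h (z, r) \<partial>PS) = F (fst z + snd z) - F (fst z)" for z
      unfolding PS_def s_unif h_def fst_conv snd_conv
      by (rule integral_uniform_directional_derivative[OF gradF _ bounded])
         (use ii[of "fst z" "fst z + snd z"] in simp)
    then show ?thesis by simp
  qed
  also have "\<dots> = (\<integral>\<omega>. F (a \<omega> + d \<omega>) - F (a \<omega>) \<partial>M)"
    unfolding PX_def by (subst integral_distr) (auto simp: X_def)
  finally show "(\<integral>\<omega>. F (a \<omega> + d \<omega>) - F (a \<omega>) \<partial>M) = (\<integral>\<omega>. gradF (a \<omega> + s \<omega> *\<^sub>R d \<omega>) \<bullet> d \<omega> \<partial>M)" ..
qed

lemma sum_discounted_powers:
  fixes \<beta> :: real
  assumes "\<beta> \<noteq> 1"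
  shows "(\<Sum>r = 1..t. \<beta> ^ (t - r)) = (1 - \<beta> ^ t) / (1 - \<beta>)"
proof -
  have "(\<Sum>r = 1..t. \<beta> ^ (t - r)) = (\<Sum>i<t. \<beta> ^ i)"
    by (rule sum.reindex_bij_witness[of _ "\<lambda>i. t - i" "\<lambda>r. t - r"]) auto
  then show ?thesis using assms by (simp add: sum_gp_strict)
qed

lemma sum_eq_weighted_discounted_sums:
  fixes a :: "nat \<Rightarrow> real" and \<beta> :: real
  assumes "T \<ge> 1"
  shows "(\<Sum>r = 1..T. a r) = (\<Sum>t = 1..T. (if t < T then 1 - \<beta> else 1) * (\<Sum>r = 1..t. \<beta> ^ (t - r) * a r))"
  using assms
proof (induction T rule: nat_induct_at_least)
  case base
  then show ?case by simp
next
  case (Suc T)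
  define S where "S t = (\<Sum>r = 1..t. \<beta> ^ (t - r) * a r)" for t
  have S_Suc: "S (Suc T) = \<beta> * S T + a (Suc T)"
  proof -
    have "S (Suc T) = (\<Sum>r = 1..T. \<beta> * (\<beta> ^ (T - r) * a r)) + a (Suc T)"
      unfolding S_def by (simp add: Suc_diff_le mult.assoc)
    then show ?thesis by (simp add: S_def sum_distrib_left)
  qed
  have T_split: "{1..T} = insert T {1..<T}" and Suc_split: "{1..Suc T} = insert (Suc T) {1..T}"
    using Suc(1) by auto
  have "(\<Sum>t = 1..T. (if t < T then 1 - \<beta> else 1) * S t) = (\<Sum>t = 1..<T. (1 - \<beta>) * S t) + S T"
    unfolding T_split by simp
  moreover have "(\<Sum>t = 1..Suc T. (if t < Suc T then 1 - \<beta> else 1) * S t)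
      = (\<Sum>t = 1..<T. (1 - \<beta>) * S t) + (1 - \<beta>) * S T + S (Suc T)"
    unfolding Suc_split T_split by simp
  ultimately show ?case
    using Suc.IH unfolding S_def[symmetric] S_Suc by (simp add: Suc_split algebra_simps)
qed

lemma lambda_norm_convex_combination_le:
  fixes gradF :: "'v::euclidean_space \<Rightarrow> 'v" and y :: "'i \<Rightarrow> 'v" and w :: "'i \<Rightarrow> real"
  assumes gradF_meas: "gradF \<in> borel_measurable borel" and I: "finite I"
    and w_nonneg: "\<And>r. r \<in> I \<Longrightarrow> 0 \<le> w r" and w_sum: "(\<Sum>r\<in>I. w r) = 1" and lam: "0 \<le> lam"
  shows "lambda_norm gradF lam (\<Sum>r\<in>I. w r *\<^sub>R y r)
     \<le> norm (\<Sum>r\<in>I. w r *\<^sub>R gradF (y r)) + lam * (\<Sum>r\<in>I. w r * (norm (y r - (\<Sum>q\<in>I. w q *\<^sub>R y q)))\<^sup>2)"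
proof -
  define x where "x = (\<Sum>r\<in>I. w r *\<^sub>R y r)"
  define PM where "PM = point_measure I (\<lambda>r. ennreal (w r))"
  define Q where "Q = distr PM borel y"
  have y_meas: "y \<in> measurable PM borel" unfolding PM_def by simp
  have PM_prob: "prob_space PM"
  proof (rule prob_spaceI)
    have "space PM = I" unfolding PM_def by (simp add: space_point_measure)
    then have "emeasure PM (space PM) = (\<Sum>r\<in>I. ennreal (w r))"
      unfolding PM_def using I by (simp add: emeasure_point_measure_finite)
    also have "\<dots> = ennreal (\<Sum>r\<in>I. w r)" using w_nonneg by (simp add: sum_ennreal)
    finally show "emeasure PM (space PM) = 1" using w_sum by simp
  qed
  have Q_prob: "prob_space Q" unfolding Q_def by (rule prob_space.prob_space_distr[OF PM_prob y_meas])
  have Q_sets: "sets Q = sets borel" unfolding Q_def by simp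
  have integrable_Q: "integrable Q h" and integral_Q: "(\<integral>z. h z \<partial>Q) = (\<Sum>r\<in>I. w r *\<^sub>R h (y r))"
    if "h \<in> borel_measurable borel" for h :: "'v \<Rightarrow> 'b::{banach, second_countable_topology}"
  proof -
    show "integrable Q h" unfolding Q_def
      by (subst integrable_distr_eq[OF y_meas that]) (simp add: PM_def integrable_point_measure_finite I)
    show "(\<integral>z. h z \<partial>Q) = (\<Sum>r\<in>I. w r *\<^sub>R h (y r))" unfolding Q_def
      by (subst integral_distr[OF y_meas that]) (simp add: PM_def lebesgue_integral_point_measure_finite I w_nonneg)
  qed
  have id_meas: "(\<lambda>z::'v. z) \<in> borel_measurable borel" by simp
  have sq_dist_meas: "(\<lambda>z. (norm (z - x))\<^sup>2) \<in> borel_measurable borel" by measurable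
  have mean: "(\<integral>z. z \<partial>Q) = x" using integral_Q[OF id_meas] by (simp add: x_def)
  have val: "norm (\<integral>z. gradF z \<partial>Q) + lam * (\<integral>z. (norm (z - x))\<^sup>2 \<partial>Q)
       = norm (\<Sum>r\<in>I. w r *\<^sub>R gradF (y r)) + lam * (\<Sum>r\<in>I. w r * (norm (y r - x))\<^sup>2)"
    using integral_Q[OF gradF_meas] integral_Q[OF sq_dist_meas] by simp
  let ?S = "{norm (\<integral>w. gradF w \<partial>p) + lam * (\<integral>w. (norm (w - x))\<^sup>2 \<partial>p) | p.
            prob_space p \<and> sets p = sets borel \<and> integrable p (\<lambda>w. w) \<and> (\<integral>w. w \<partial>p) = x
            \<and> integrable p gradF \<and> integrable p (\<lambda>w. (norm (w - x))\<^sup>2)}"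
  have mem: "norm (\<integral>z. gradF z \<partial>Q) + lam * (\<integral>z. (norm (z - x))\<^sup>2 \<partial>Q) \<in> ?S"
    using Q_prob Q_sets integrable_Q[OF id_meas] mean integrable_Q[OF gradF_meas] integrable_Q[OF sq_dist_meas] by blast
  have bdd: "bdd_below ?S"
    by (rule bdd_belowI[where m=0]) (use lam in \<open>auto intro!: add_nonneg_nonneg mult_nonneg_nonneg integral_nonneg_AE\<close>)
  have "lambda_norm gradF lam x \<le> norm (\<integral>z. gradF z \<partial>Q) + lam * (\<integral>z. (norm (z - x))\<^sup>2 \<partial>Q)"
    unfolding lambda_norm_def by (rule cInf_lower[OF mem bdd])
  then show ?thesis using val by (simp add: x_def)
qed

lemma weighted_sq_dist_to_mean_le:
  fixes y :: "'i \<Rightarrow> 'v::euclidean_space" and w :: "'i \<Rightarrow> real"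
  assumes w_sum: "(\<Sum>r\<in>I. w r) = 1"
  shows "(\<Sum>r\<in>I. w r * (norm (y r - (\<Sum>q\<in>I. w q *\<^sub>R y q)))\<^sup>2) \<le> (\<Sum>r\<in>I. w r * (norm (y r - c))\<^sup>2)"
proof -
  define m where "m = (\<Sum>q\<in>I. w q *\<^sub>R y q)"
  have expand: "(norm (y r - c))\<^sup>2 = (norm (y r - m))\<^sup>2 + 2 * ((y r - m) \<bullet> (m - c)) + (norm (m - c))\<^sup>2" for r
  proof -
    have norm_add_sq: "(norm (a + b))\<^sup>2 = (norm a)\<^sup>2 + 2 * (a \<bullet> b) + (norm b)\<^sup>2" for a b :: 'v
      by (simp add: power2_norm_eq_inner inner_add_left inner_add_right inner_commute)
    show ?thesis using norm_add_sq[of "y r - m" "m - c"] by simp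
  qed
  have cross: "(\<Sum>r\<in>I. w r * ((y r - m) \<bullet> (m - c))) = 0"
  proof -
    have "(\<Sum>r\<in>I. w r * ((y r - m) \<bullet> (m - c))) = (\<Sum>r\<in>I. (w r *\<^sub>R (y r - m))) \<bullet> (m - c)"
      by (simp add: inner_sum_left)
    also have "(\<Sum>r\<in>I. (w r *\<^sub>R (y r - m))) = m - (\<Sum>r\<in>I. w r) *\<^sub>R m"
      by (simp add: m_def scaleR_diff_right sum_subtractf scaleR_sum_left)
    finally show ?thesis using w_sum by simp
  qed
  have "(\<Sum>r\<in>I. w r * (norm (y r - c))\<^sup>2) = (\<Sum>r\<in>I. w r * (norm (y r - m))\<^sup>2) + 2 * (\<Sum>r\<in>I. w r * ((y r - m) \<bullet> (m - c))) + (\<Sum>r\<in>I. w r) * (norm (m - c))\<^sup>2"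
  proof -
    have "(\<Sum>r\<in>I. w r * (norm (y r - c))\<^sup>2) = (\<Sum>r\<in>I. w r * (norm (y r - m))\<^sup>2 + 2 * (w r * ((y r - m) \<bullet> (m - c))) + w r * (norm (m - c))\<^sup>2)"
      by (rule sum.cong) (simp_all only: expand distrib_left mult.left_commute)
    also have "\<dots> = (\<Sum>r\<in>I. w r * (norm (y r - m))\<^sup>2) + 2 * (\<Sum>r\<in>I. w r * ((y r - m) \<bullet> (m - c))) + (\<Sum>r\<in>I. w r) * (norm (m - c))\<^sup>2"
      by (simp only: sum.distrib sum_distrib_left sum_distrib_right)
    finally show ?thesis .
  qed
  also have "\<dots> \<ge> (\<Sum>r\<in>I. w r * (norm (y r - m))\<^sup>2)" using cross w_sum by simp
  finally show ?thesis by (simp add: m_def)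
qed

locale anchoring_scheme =
  fixes F :: "'a::euclidean_space \<Rightarrow> real" and gradF :: "'a \<Rightarrow> 'a"
    and G \<sigma> lam \<epsilon> :: real and x0 :: 'a and N T :: nat
    and M :: "'b measure"
    and D :: "nat \<Rightarrow> nat \<Rightarrow> 'b \<Rightarrow> 'a" and s :: "nat \<Rightarrow> nat \<Rightarrow> 'b \<Rightarrow> real"
    and g :: "nat \<Rightarrow> nat \<Rightarrow> 'b \<Rightarrow> 'a" and J :: "nat \<Rightarrow> 'b \<Rightarrow> nat"
    and Fpre Fy :: "nat \<Rightarrow> nat \<Rightarrow> 'b measure"
    and \<beta> \<mu> :: real
  assumes beta_def: "\<beta> = 1 - (\<epsilon> / (7 * (G + \<sigma>)))\<^sup>2"
    and mu_def: "\<mu> = 2 * sqrt lam * sqrt \<epsilon>"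
    and grad: "\<And>x. (F has_derivative (\<lambda>h. gradF x \<bullet> h)) (at x)"
    and integral_identity: "\<And>x w. ((\<lambda>t. gradF (w + t *\<^sub>R (x - w)) \<bullet> (x - w)) has_integral (F x - F w)) {0..1}"
    and grad_bound: "\<And>x. norm (gradF x) \<le> G"
    and sigma_nonneg: "\<sigma> \<ge> 0"
    and lam_pos: "lam > 0" and eps_pos: "\<epsilon> > 0" and eps_le: "\<epsilon> \<le> 7 / 2 * (G + \<sigma>)"
    and F_bdd: "bdd_below (range F)"
    and N_pos: "N \<ge> 1"
    and T_ge: "real T \<ge> 49 * (G + \<sigma>)\<^sup>2 * \<epsilon> powr (-2)"
    and M_prob: "prob_space M"
    and sub_pre: "\<And>n t. n \<in> {1..N} \<Longrightarrow> t \<in> {1..Suc T} \<Longrightarrow> subalgebra M (Fpre n t)"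
    and sub_y: "\<And>n t. n \<in> {1..N} \<Longrightarrow> t \<in> {1..T} \<Longrightarrow> subalgebra M (Fy n t)"
    and mono_pre_y: "\<And>n t. n \<in> {1..N} \<Longrightarrow> t \<in> {1..T} \<Longrightarrow> sets (Fpre n t) \<subseteq> sets (Fy n t)"
    and mono_y_pre: "\<And>n t. n \<in> {1..N} \<Longrightarrow> t \<in> {1..T} \<Longrightarrow> sets (Fy n t) \<subseteq> sets (Fpre n (Suc t))"
    and mono_epoch: "\<And>n. n \<in> {1..<N} \<Longrightarrow> sets (Fpre n (Suc T)) \<subseteq> sets (Fpre (Suc n) 1)"
    and D_meas: "\<And>n t. n \<in> {1..N} \<Longrightarrow> t \<in> {1..T} \<Longrightarrow> D n t \<in> borel_measurable (Fpre n t)"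
    and D_sq_int: "\<And>n t. n \<in> {1..N} \<Longrightarrow> t \<in> {1..T} \<Longrightarrow> integrable M (\<lambda>\<omega>. (norm (D n t \<omega>))\<^sup>2)"
    and s_meas: "\<And>n t. n \<in> {1..N} \<Longrightarrow> t \<in> {1..T} \<Longrightarrow> s n t \<in> borel_measurable (Fy n t)"
    and s_unif: "\<And>n t. n \<in> {1..N} \<Longrightarrow> t \<in> {1..T} \<Longrightarrow>
                   distr M borel (s n t) = uniform_measure lborel {0..1}"
    and s_indep: "\<And>n t. n \<in> {1..N} \<Longrightarrow> t \<in> {1..T} \<Longrightarrow>
                   prob_space.indep_set M (sets (Fpre n t)) (sets (vimage_algebra (space M) (s n t) borel))"
    and g_meas: "\<And>n t. n \<in> {1..N} \<Longrightarrow> t \<in> {1..T} \<Longrightarrow> g n t \<in> borel_measurable (Fpre n (Suc t))"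
    and g_int: "\<And>n t. n \<in> {1..N} \<Longrightarrow> t \<in> {1..T} \<Longrightarrow> integrable M (g n t)"
    and g_unbiased: "\<And>n t b. n \<in> {1..N} \<Longrightarrow> t \<in> {1..T} \<Longrightarrow> b \<in> Basis \<Longrightarrow>
                   AE \<omega> in M. real_cond_exp M (Fy n t) (\<lambda>\<omega>. g n t \<omega> \<bullet> b) \<omega>
                                = gradF (iter_y x0 D s J n t \<omega>) \<bullet> b"
    and g_var_int: "\<And>n t. n \<in> {1..N} \<Longrightarrow> t \<in> {1..T} \<Longrightarrow>
                   integrable M (\<lambda>\<omega>. (norm (g n t \<omega> - gradF (iter_y x0 D s J n t \<omega>)))\<^sup>2)"
    and g_var: "\<And>n t. n \<in> {1..N} \<Longrightarrow> t \<in> {1..T} \<Longrightarrow>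
                   AE \<omega> in M. real_cond_exp M (Fy n t)
                     (\<lambda>\<omega>. (norm (g n t \<omega> - gradF (iter_y x0 D s J n t \<omega>)))\<^sup>2) \<omega> \<le> \<sigma>\<^sup>2"
    and J_meas: "\<And>n. n \<in> {1..<N} \<Longrightarrow> J n \<in> measurable (Fpre (Suc n) 1) (count_space UNIV)"
    and J_unif: "\<And>n. n \<in> {1..<N} \<Longrightarrow>
                   distr M (count_space UNIV) (J n) = uniform_measure (count_space UNIV) {1..T}"
    and J_indep: "\<And>n. n \<in> {1..<N} \<Longrightarrow>
                   prob_space.indep_set M (sets (Fpre n (Suc T)))
                     (sets (vimage_algebra (space M) (J n) (count_space UNIV)))"
    and regret_bound: "\<And>n t u. n \<in> {1..N} \<Longrightarrow> t \<in> {1..T} \<Longrightarrow> u \<in> borel_measurable M \<Longrightarrow>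
                   integrable M (\<lambda>\<omega>. (norm (u \<omega>))\<^sup>2) \<Longrightarrow>
                   (\<integral>\<omega>. regret \<beta> \<mu> g D n t u \<omega> \<partial>M)
                     \<le> (\<integral>\<omega>. 2 * norm (u \<omega>) * (G + \<sigma>) / (\<beta> * sqrt (1 - \<beta>))
                              + \<mu> / 2 * (norm (u \<omega>))\<^sup>2 \<partial>M)"
begin

sublocale prob_space M by (rule M_prob)

definition kappa where "kappa = \<epsilon> / (7 * (G + \<sigma>))"

lemma G_plus_sigma_pos: "0 < G + \<sigma>"
proof -
  have "0 < 7 / 2 * (G + \<sigma>)" using eps_pos eps_le by linarith
  then show ?thesis by simp
qed

lemma G_nonneg: "0 \<le> G"
  using order_trans[OF norm_ge_zero grad_bound] .

lemma kappa_pos: "0 < kappa"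
  unfolding kappa_def using G_plus_sigma_pos eps_pos by simp

lemma kappa_le_half: "kappa \<le> 1/2"
  unfolding kappa_def using G_plus_sigma_pos eps_le by (simp add: field_simps)

lemma one_minus_beta: "1 - \<beta> = kappa\<^sup>2"
  unfolding kappa_def beta_def by simp

lemma beta_lt_1: "\<beta> < 1"
  using one_minus_beta kappa_pos by (metis diff_gt_0_iff_gt zero_less_power2 less_irrefl)

lemma beta_ge_3_4: "3/4 \<le> \<beta>"
proof -
  have "kappa\<^sup>2 \<le> (1/2)\<^sup>2" using kappa_pos kappa_le_half by (intro power_mono) auto
  then show ?thesis using one_minus_beta by (simp add: power2_eq_square)
qed

lemma beta_pos: "0 < \<beta>"
  using beta_ge_3_4 by simp

lemma T_ge_inverse_kappa_sq: "1 / kappa\<^sup>2 \<le> real T"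
proof -
  have "49 * (G + \<sigma>)\<^sup>2 * \<epsilon> powr (-2) = 1 / kappa\<^sup>2"
    using eps_pos G_plus_sigma_pos
    by (simp add: kappa_def powr_minus powr_realpow field_simps power2_eq_square)
  then show ?thesis using T_ge by simp
qed

lemma T_pos: "1 \<le> T"
proof -
  have "kappa\<^sup>2 \<le> (1/2)\<^sup>2" using kappa_pos kappa_le_half by (intro power_mono) auto
  then have "4 \<le> 1 / kappa\<^sup>2" using kappa_pos by (simp add: field_simps power2_eq_square)
  then show ?thesis using T_ge_inverse_kappa_sq by linarith
qed

lemma Fpre_mono:
  assumes n: "n \<in> {1..N}" and "1 \<le> t" "t \<le> t'" "t' \<le> Suc T"
  shows "sets (Fpre n t) \<subseteq> sets (Fpre n t')"
  using assms(3,4)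
proof (induction t' rule: dec_induct)
  case (step k)
  then have k: "k \<in> {1..T}" using assms(2) by auto
  then show ?case using step mono_pre_y[OF n k] mono_y_pre[OF n k] by auto
qed simp

lemma measurable_Fpre_mono:
  assumes n: "n \<in> {1..N}" and t: "1 \<le> t" "t \<le> t'" "t' \<le> Suc T"
    and f: "f \<in> measurable (Fpre n t) X"
  shows "f \<in> measurable (Fpre n t') X"
proof (rule measurable_mono_subalgebra[OF _ _ Fpre_mono[OF n t] f])
  show "subalgebra M (Fpre n t)" "subalgebra M (Fpre n t')"
    using sub_pre n t by auto
qed

lemma measurable_Fpre_next_epoch:
  assumes n: "n \<in> {1..<N}" and t: "1 \<le> t" "t \<le> Suc T" and f: "f \<in> measurable (Fpre n t) X"
  shows "f \<in> measurable (Fpre (Suc n) 1) X"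
proof (rule measurable_mono_subalgebra[OF _ _ mono_epoch[OF n]])
  show "f \<in> measurable (Fpre n (Suc T)) X"
    using n t by (intro measurable_Fpre_mono[OF _ _ _ _ f]) auto
  show "subalgebra M (Fpre n (Suc T))" "subalgebra M (Fpre (Suc n) 1)"
    using sub_pre n T_pos by auto
qed

(* J n clamped to {1..T}: it agrees with J n almost surely, and only directions D n t with
   t \<in> {1..T}, which are known to be measurable, are ever selected. *)
definition "Jc n \<omega> = (if J n \<omega> \<in> {1..T} then J n \<omega> else 1)"

definition "anc n \<omega> = anchor x0 D Jc n \<omega>"

definition "y n t \<omega> = anc n \<omega> + s n t \<omega> *\<^sub>R D n t \<omega>"

definition "noise n t \<omega> = g n t \<omega> - gradF (y n t \<omega>)"

lemma Jc_in_range: "Jc n \<omega> \<in> {1..T}"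
  using T_pos by (auto simp: Jc_def)

lemma anc_1: "anc (Suc 0) \<omega> = x0"
  by (simp add: anc_def)

lemma anc_Suc: "1 \<le> n \<Longrightarrow> anc (Suc n) \<omega> = anc n \<omega> + D n (Jc n \<omega>) \<omega>"
  by (cases n) (auto simp: anc_def)

lemma measurable_D_at_Jc:
  assumes n: "n \<in> {1..<N}"
  shows "(\<lambda>\<omega>. D n (Jc n \<omega>) \<omega>) \<in> borel_measurable (Fpre (Suc n) 1)"
proof -
  have select: "(\<Sum>t=1..T. of_bool (Jc n \<omega> = t) *\<^sub>R D n t \<omega>) = D n (Jc n \<omega>) \<omega>" for \<omega>
  proof -
    have "(\<Sum>t=1..T. of_bool (Jc n \<omega> = t) *\<^sub>R D n t \<omega>) = (\<Sum>t=1..T. if t = Jc n \<omega> then D n (Jc n \<omega>) \<omega> else 0)"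
      by (rule sum.cong) auto
    then show ?thesis using Jc_in_range[of n \<omega>] by simp
  qed
  have "(\<lambda>\<omega>. of_bool (Jc n \<omega> = t) :: real) \<in> borel_measurable (Fpre (Suc n) 1)" for t
    using measurable_compose[OF J_meas[OF n], of "\<lambda>j. of_bool ((if j \<in> {1..T} then j else 1) = t) :: real"]
    by (simp add: Jc_def)
  moreover have "D n t \<in> borel_measurable (Fpre (Suc n) 1)" if "t \<in> {1..T}" for t
    using n that by (intro measurable_Fpre_next_epoch[OF n _ _ D_meas]) auto
  ultimately have "(\<lambda>\<omega>. \<Sum>t=1..T. of_bool (Jc n \<omega> = t) *\<^sub>R D n t \<omega>) \<in> borel_measurable (Fpre (Suc n) 1)"
    by (intro borel_measurable_sum borel_measurable_scaleR) auto
  then show ?thesis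
    unfolding select .
qed

lemma anc_measurable: "1 \<le> n \<Longrightarrow> n \<le> N \<Longrightarrow> anc n \<in> borel_measurable (Fpre n 1)"
proof (induction n rule: nat_induct_at_least)
  case base
  then show ?case by (simp add: anc_1)
next
  case (Suc n)
  then have n: "n \<in> {1..<N}" by auto
  have "anc n \<in> borel_measurable (Fpre (Suc n) 1)"
    using Suc n by (intro measurable_Fpre_next_epoch[OF n _ _ Suc.IH]) auto
  then show ?case
    using measurable_D_at_Jc[OF n] anc_Suc[OF Suc(1)] by simp
qed

lemma J_measurable: "n \<in> {1..<N} \<Longrightarrow> J n \<in> measurable M (count_space UNIV)"
  by (rule measurable_from_subalg[OF sub_pre J_meas]) auto

lemma AE_J_in_range: "n \<in> {1..<N} \<Longrightarrow> AE \<omega> in M. J n \<omega> \<in> {1..T}"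
proof -
  assume n: "n \<in> {1..<N}"
  have "AE j in uniform_measure (count_space UNIV) {1..T}. j \<in> {1..T}"
    by (rule AE_uniform_measureI) auto
  then show ?thesis
    unfolding J_unif[OF n, symmetric] by (rule AE_distrD[OF J_measurable[OF n]])
qed

lemma AE_anchor_eq_anc: "AE \<omega> in M. \<forall>n\<in>{1..N}. anchor x0 D J n \<omega> = anc n \<omega>"
proof -
  have "AE \<omega> in M. \<forall>m\<in>{1..<N}. J m \<omega> \<in> {1..T}"
    using AE_J_in_range by (subst AE_finite_all) auto
  then show ?thesis
  proof (rule AE_mp, intro AE_I2 impI)
    fix \<omega> assume J_range: "\<forall>m\<in>{1..<N}. J m \<omega> \<in> {1..T}"
    have "anchor x0 D J n \<omega> = anc n \<omega>" if "1 \<le> n" "n \<le> N" for n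
      using that
    proof (induction n rule: nat_induct_at_least)
      case (Suc n)
      then have "J n \<omega> = Jc n \<omega>" using J_range by (auto simp: Jc_def)
      moreover obtain m where "n = Suc m" using Suc(1) by (cases n) auto
      ultimately show ?case using Suc anc_Suc[OF Suc(1)] by simp
    qed (simp add: anc_1)
    then show "\<forall>n\<in>{1..N}. anchor x0 D J n \<omega> = anc n \<omega>" by auto
  qed
qed

lemma gradF_measurable[measurable]: "gradF \<in> borel_measurable borel"
  by (rule borel_measurable_gradient[OF grad])

lemma F_measurable[measurable]: "F \<in> borel_measurable borel"
  using grad has_derivative_continuous continuous_at_imp_continuous_on
  by (intro borel_measurable_continuous_onI) blast

context
  fixes n t assumes n: "n \<in> {1..N}" and t: "t \<in> {1..T}"
begin

lemma Fpre_subalgebra: "subalgebra M (Fpre n t)"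
  using sub_pre[OF n] t by auto

lemma Fpre_Suc_subalgebra: "subalgebra M (Fpre n (Suc t))"
  using sub_pre[OF n] t by auto

lemma measurable_Fy_if_Fpre: "f \<in> measurable (Fpre n t) X \<Longrightarrow> f \<in> measurable (Fy n t) X"
  by (rule measurable_mono_subalgebra[OF Fpre_subalgebra sub_y[OF n t] mono_pre_y[OF n t]])

lemma measurable_Fpre_Suc_if_Fy: "f \<in> measurable (Fy n t) X \<Longrightarrow> f \<in> measurable (Fpre n (Suc t)) X"
  by (rule measurable_mono_subalgebra[OF sub_y[OF n t] Fpre_Suc_subalgebra mono_y_pre[OF n t]])

lemma anc_Fpre: "anc n \<in> borel_measurable (Fpre n t)"
  using n t by (intro measurable_Fpre_mono[OF n _ _ _ anc_measurable]) auto

lemma y_Fy: "y n t \<in> borel_measurable (Fy n t)"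
  unfolding y_def
  using measurable_Fy_if_Fpre[OF anc_Fpre] measurable_Fy_if_Fpre[OF D_meas[OF n t]] s_meas[OF n t]
  by measurable

lemma noise_Fpre_Suc: "noise n t \<in> borel_measurable (Fpre n (Suc t))"
  unfolding noise_def using g_meas[OF n t] measurable_Fpre_Suc_if_Fy[OF y_Fy] by measurable

lemma anc_M[measurable]: "anc n \<in> borel_measurable M"
  using measurable_from_subalg[OF Fpre_subalgebra anc_Fpre] .

lemma D_M[measurable]: "D n t \<in> borel_measurable M"
  using measurable_from_subalg[OF Fpre_subalgebra D_meas[OF n t]] .

lemma s_M[measurable]: "s n t \<in> borel_measurable M"
  using measurable_from_subalg[OF sub_y[OF n t] s_meas[OF n t]] .

lemma y_M[measurable]: "y n t \<in> borel_measurable M"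
  using measurable_from_subalg[OF sub_y[OF n t] y_Fy] .

lemma g_M[measurable]: "g n t \<in> borel_measurable M"
  using measurable_from_subalg[OF Fpre_Suc_subalgebra g_meas[OF n t]] .

lemma noise_M[measurable]: "noise n t \<in> borel_measurable M"
  using measurable_from_subalg[OF Fpre_Suc_subalgebra noise_Fpre_Suc] .

lemma AE_iter_y_eq_y: "AE \<omega> in M. iter_y x0 D s J n t \<omega> = y n t \<omega>"
  using AE_anchor_eq_anc by eventually_elim (use n in \<open>auto simp: iter_y_def y_def\<close>)

lemma AE_noise_eq: "AE \<omega> in M. g n t \<omega> - gradF (iter_y x0 D s J n t \<omega>) = noise n t \<omega>"
  using AE_iter_y_eq_y by eventually_elim (simp add: noise_def)

lemma noise_sq_integrable: "integrable M (\<lambda>\<omega>. (norm (noise n t \<omega>))\<^sup>2)"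
  using g_var_int[OF n t] AE_noise_eq
  by (subst integrable_cong_AE[symmetric]) (auto elim: AE_mp)

lemma gradF_y_sq_integrable: "integrable M (\<lambda>\<omega>. (norm (gradF (y n t \<omega>)))\<^sup>2)"
  using grad_bound G_nonneg by (intro integrable_const_bound[where B="G\<^sup>2"]) (auto intro!: power_mono)

lemma g_sq_integrable: "integrable M (\<lambda>\<omega>. (norm (g n t \<omega>))\<^sup>2)"
proof (rule Bochner_Integration.integrable_bound)
  show "integrable M (\<lambda>\<omega>. 2 * (norm (noise n t \<omega>))\<^sup>2 + 2 * (norm (gradF (y n t \<omega>)))\<^sup>2)"
    using noise_sq_integrable gradF_y_sq_integrable by auto
  have "(norm (g n t \<omega>))\<^sup>2 \<le> 2 * (norm (noise n t \<omega>))\<^sup>2 + 2 * (norm (gradF (y n t \<omega>)))\<^sup>2" for \<omega>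
  proof -
    have "norm (g n t \<omega>) \<le> norm (noise n t \<omega>) + norm (gradF (y n t \<omega>))"
      using norm_triangle_ineq[of "noise n t \<omega>" "gradF (y n t \<omega>)"] by (simp add: noise_def)
    then have "(norm (g n t \<omega>))\<^sup>2 \<le> (norm (noise n t \<omega>) + norm (gradF (y n t \<omega>)))\<^sup>2"
      by (intro power_mono) auto
    then show ?thesis
      using sum_squares_bound[of "norm (noise n t \<omega>)" "norm (gradF (y n t \<omega>))"]
      by (simp add: power2_sum)
  qed
  then show "AE \<omega> in M. norm ((norm (g n t \<omega>))\<^sup>2)
      \<le> norm (2 * (norm (noise n t \<omega>))\<^sup>2 + 2 * (norm (gradF (y n t \<omega>)))\<^sup>2)"
    by simp
qed simp

lemma D_norm_integrable: "integrable M (\<lambda>\<omega>. norm (D n t \<omega>))"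
  using square_integrable_imp_integrable[of "\<lambda>\<omega>. norm (D n t \<omega>)"] D_sq_int[OF n t] by simp

lemma cond_exp_g_eq:
  assumes "b \<in> Basis"
  shows "AE \<omega> in M. real_cond_exp M (Fy n t) (\<lambda>\<omega>. g n t \<omega> \<bullet> b) \<omega> = gradF (y n t \<omega>) \<bullet> b"
  using AE_iter_y_eq_y g_unbiased[OF n t assms] by eventually_elim simp

lemma integral_noise_sq_le: "(\<integral>\<omega>. (norm (noise n t \<omega>))\<^sup>2 \<partial>M) \<le> \<sigma>\<^sup>2"
proof -
  interpret Fy: finite_measure_subalgebra M "Fy n t" by unfold_locales (rule sub_y[OF n t])
  have "AE \<omega> in M. real_cond_exp M (Fy n t) (\<lambda>\<omega>. (norm (noise n t \<omega>))\<^sup>2) \<omega> \<le> \<sigma>\<^sup>2"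
  proof -
    have "AE \<omega> in M. real_cond_exp M (Fy n t) (\<lambda>\<omega>. (norm (g n t \<omega> - gradF (iter_y x0 D s J n t \<omega>)))\<^sup>2) \<omega>
        = real_cond_exp M (Fy n t) (\<lambda>\<omega>. (norm (noise n t \<omega>))\<^sup>2) \<omega>"
      using AE_noise_eq g_var_int[OF n t]
      by (intro Fy.real_cond_exp_cong) (auto elim: AE_mp intro: borel_measurable_integrable)
    then show ?thesis using g_var[OF n t] by eventually_elim simp
  qed
  then have "(\<integral>\<omega>. real_cond_exp M (Fy n t) (\<lambda>\<omega>. (norm (noise n t \<omega>))\<^sup>2) \<omega> \<partial>M) \<le> (\<integral>\<omega>. \<sigma>\<^sup>2 \<partial>M)"
    using Fy.real_cond_exp_int(1)[OF noise_sq_integrable] by (intro integral_mono_AE) auto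
  then show ?thesis
    using Fy.real_cond_exp_int(2)[OF noise_sq_integrable] by (simp add: prob_space)
qed

lemma integrable_inner_g_D: "integrable M (\<lambda>\<omega>. g n t \<omega> \<bullet> D n t \<omega>)"
  by (rule integrable_bounded_by_norm_product[OF g_sq_integrable D_sq_int[OF n t]])
     (auto intro: Cauchy_Schwarz_ineq2)

lemma integral_increment_eq_inner_g_D:
  shows "integrable M (\<lambda>\<omega>. F (anc n \<omega> + D n t \<omega>) - F (anc n \<omega>))"
    and "(\<integral>\<omega>. F (anc n \<omega> + D n t \<omega>) - F (anc n \<omega>) \<partial>M) = (\<integral>\<omega>. g n t \<omega> \<bullet> D n t \<omega> \<partial>M)"
proof -
  show "integrable M (\<lambda>\<omega>. F (anc n \<omega> + D n t \<omega>) - F (anc n \<omega>))"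
  proof (rule Bochner_Integration.integrable_bound[where f="\<lambda>\<omega>. G * norm (D n t \<omega>)"])
    show "AE \<omega> in M. norm (F (anc n \<omega> + D n t \<omega>) - F (anc n \<omega>)) \<le> norm (G * norm (D n t \<omega>))"
    proof (rule AE_I2)
      fix \<omega>
      show "norm (F (anc n \<omega> + D n t \<omega>) - F (anc n \<omega>)) \<le> norm (G * norm (D n t \<omega>))"
        using abs_diff_le_if_gradient_bounded[OF integral_identity[of "anc n \<omega>" "anc n \<omega> + D n t \<omega>"]
            grad_bound] G_nonneg by simp
    qed
  qed (use D_norm_integrable in simp_all)
  have "(\<integral>\<omega>. F (anc n \<omega> + D n t \<omega>) - F (anc n \<omega>) \<partial>M) = (\<integral>\<omega>. gradF (y n t \<omega>) \<bullet> D n t \<omega> \<partial>M)"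
    unfolding y_def
    by (rule integral_increment_eq_randomized_gradient(2)[OF gradF_measurable F_measurable
          integral_identity grad_bound Fpre_subalgebra anc_Fpre D_meas[OF n t] s_M s_unif[OF n t]
          s_indep[OF n t] D_norm_integrable])
  also have "\<dots> = (\<integral>\<omega>. g n t \<omega> \<bullet> D n t \<omega> \<partial>M)"
    by (rule integral_inner_eq_if_cond_exp_eq[OF sub_y[OF n t] measurable_Fy_if_Fpre[OF D_meas[OF n t]]
          g_M y_M[THEN measurable_compose, OF gradF_measurable] g_sq_integrable D_sq_int[OF n t]
          gradF_y_sq_integrable cond_exp_g_eq, symmetric])
  finally show "(\<integral>\<omega>. F (anc n \<omega> + D n t \<omega>) - F (anc n \<omega>) \<partial>M) = (\<integral>\<omega>. g n t \<omega> \<bullet> D n t \<omega> \<partial>M)" .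
qed

end

lemma integral_noise_orthogonal:
  assumes n: "n \<in> {1..N}" and r: "r \<in> {1..T}" and q: "q \<in> {1..T}" and "r \<noteq> q"
  shows "(\<integral>\<omega>. noise n r \<omega> \<bullet> noise n q \<omega> \<partial>M) = 0"
proof -
  have ordered: "(\<integral>\<omega>. noise n r \<omega> \<bullet> noise n q \<omega> \<partial>M) = 0"
    if r: "r \<in> {1..T}" and q: "q \<in> {1..T}" and "r < q" for r q
  proof -
    have "noise n r \<in> borel_measurable (Fpre n q)"
      using that by (intro measurable_Fpre_mono[OF n _ _ _ noise_Fpre_Suc[OF n r]]) auto
    then have noise_r: "noise n r \<in> borel_measurable (Fy n q)"
      by (rule measurable_Fy_if_Fpre[OF n q])
    have "(\<integral>\<omega>. g n q \<omega> \<bullet> noise n r \<omega> \<partial>M) = (\<integral>\<omega>. gradF (y n q \<omega>) \<bullet> noise n r \<omega> \<partial>M)"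
      by (rule integral_inner_eq_if_cond_exp_eq[OF sub_y[OF n q] noise_r g_M[OF n q] _
            g_sq_integrable[OF n q] noise_sq_integrable[OF n r] gradF_y_sq_integrable[OF n q]
            cond_exp_g_eq[OF n q]])
         (use y_M[OF n q] in measurable)
    moreover have "integrable M (\<lambda>\<omega>. g n q \<omega> \<bullet> noise n r \<omega>)"
      by (rule integrable_bounded_by_norm_product[OF g_sq_integrable[OF n q] noise_sq_integrable[OF n r]])
         (use g_M[OF n q] noise_M[OF n r] in \<open>auto intro: Cauchy_Schwarz_ineq2\<close>)
    moreover have "integrable M (\<lambda>\<omega>. gradF (y n q \<omega>) \<bullet> noise n r \<omega>)"
      by (rule integrable_bounded_by_norm_product[OF gradF_y_sq_integrable[OF n q] noise_sq_integrable[OF n r]])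
         (use y_M[OF n q] noise_M[OF n r] in \<open>auto intro: Cauchy_Schwarz_ineq2\<close>)
    moreover have "(\<integral>\<omega>. noise n r \<omega> \<bullet> noise n q \<omega> \<partial>M)
        = (\<integral>\<omega>. g n q \<omega> \<bullet> noise n r \<omega> - gradF (y n q \<omega>) \<bullet> noise n r \<omega> \<partial>M)"
      by (simp add: noise_def[of n q] inner_diff_right inner_commute)
    ultimately show ?thesis by simp
  qed
  show ?thesis
  proof (cases "r < q")
    case False
    then have "q < r" using \<open>r \<noteq> q\<close> by simp
    then show ?thesis using ordered[OF q r] by (simp add: inner_commute)
  qed (use ordered[OF r q] in simp)
qed

definition "radius = sqrt \<epsilon> / sqrt lam"

definition "disc_grad n t \<omega> = (\<Sum>r=1..t. \<beta> ^ (t - r) *\<^sub>R g n r \<omega>)"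

(* The best comparator of norm radius against the linear part of the discounted losses. *)
definition "comparator n t \<omega> =
  (if disc_grad n t \<omega> = 0 then 0 else (- (radius / norm (disc_grad n t \<omega>))) *\<^sub>R disc_grad n t \<omega>)"

definition "comparator_regret_bound =
  2 * radius * (G + \<sigma>) / (\<beta> * sqrt (1 - \<beta>)) + \<mu> / 2 * radius\<^sup>2"

definition "normalizer t = (1 - \<beta>) / (1 - \<beta> ^ t)"

lemma radius_pos: "0 < radius"
  unfolding radius_def using eps_pos lam_pos by simp

lemma mu_nonneg: "0 \<le> \<mu>"
  unfolding mu_def using eps_pos lam_pos by simp

lemma mu_half_eq: "\<mu> / 2 = lam * radius"
  unfolding mu_def radius_def using eps_pos lam_pos by (simp add: field_simps)

lemma lam_radius_sq: "lam * radius\<^sup>2 = \<epsilon>"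
  unfolding radius_def using lam_pos eps_pos by (simp add: power_divide)

lemma norm_comparator_le: "norm (comparator n t \<omega>) \<le> radius"
  using radius_pos by (auto simp: comparator_def)

lemma regret_comparator_eq:
  "regret \<beta> \<mu> g D n t (comparator n t) \<omega>
    = (\<Sum>r=1..t. \<beta> ^ (t - r) * (g n r \<omega> \<bullet> D n r \<omega>)) + \<mu> / 2 * (\<Sum>r=1..t. \<beta> ^ (t - r) * (norm (D n r \<omega>))\<^sup>2)
      + radius * norm (disc_grad n t \<omega>) - \<mu> / 2 * (\<Sum>r=1..t. \<beta> ^ (t - r)) * (norm (comparator n t \<omega>))\<^sup>2"
proof -
  have "disc_grad n t \<omega> \<bullet> comparator n t \<omega> = - radius * norm (disc_grad n t \<omega>)"
    by (auto simp: comparator_def power2_norm_eq_inner[symmetric] power2_eq_square)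
  then show ?thesis
    unfolding regret_def loss_def disc_grad_def
    by (simp add: inner_sum_left sum_subtractf sum.distrib sum_distrib_left sum_distrib_right algebra_simps)
qed

lemma beta_pow_lt_1: "1 \<le> t \<Longrightarrow> \<beta> ^ t < 1"
  using beta_pos beta_lt_1 by (simp add: power_less_one_iff)

lemma normalizer_pos: "1 \<le> t \<Longrightarrow> 0 < normalizer t"
  unfolding normalizer_def using beta_pow_lt_1[of t] beta_lt_1 by simp

lemma normalizer_sum_discounted: "1 \<le> t \<Longrightarrow> normalizer t * (\<Sum>r=1..t. \<beta> ^ (t - r)) = 1"
  unfolding normalizer_def sum_discounted_powers[OF less_imp_neq[OF beta_lt_1]]
  using beta_pow_lt_1[of t] beta_lt_1 by simp

lemma AE_s_in_01: "n \<in> {1..N} \<Longrightarrow> r \<in> {1..T} \<Longrightarrow> AE \<omega> in M. s n r \<omega> \<in> {0..1}"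
proof -
  assume n: "n \<in> {1..N}" and r: "r \<in> {1..T}"
  have "AE x in uniform_measure lborel {0..1::real}. x \<in> {0..1}"
    by (rule AE_uniform_measureI) auto
  then show ?thesis
    unfolding s_unif[OF n r, symmetric] by (rule AE_distrD[OF s_M[OF n r]])
qed

abbreviation "avg_weight t r \<equiv> normalizer t * \<beta> ^ (t - r)"

lemma avg_weight_nonneg: "1 \<le> t \<Longrightarrow> 0 \<le> avg_weight t r"
  using normalizer_pos[of t] beta_pos by simp

lemma sum_avg_weight: "1 \<le> t \<Longrightarrow> (\<Sum>r=1..t. avg_weight t r) = 1"
  using normalizer_sum_discounted[of t] by (simp add: sum_distrib_left)

lemma ybar_eq_avg:
  assumes "anchor x0 D J n \<omega> = anc n \<omega>"
  shows "ybar \<beta> x0 D s J n t \<omega> = (\<Sum>r=1..t. avg_weight t r *\<^sub>R y n r \<omega>)"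
  unfolding ybar_def iter_y_def assms normalizer_def by (simp add: scaleR_sum_right y_def)

lemma spread_le:
  assumes t: "1 \<le> t" and s_01: "\<forall>r\<in>{1..t}. s n r \<omega> \<in> {0..1}"
  shows "(\<Sum>r=1..t. avg_weight t r * (norm (y n r \<omega> - (\<Sum>q=1..t. avg_weight t q *\<^sub>R y n q \<omega>)))\<^sup>2)
    \<le> normalizer t * (\<Sum>r=1..t. \<beta> ^ (t - r) * (norm (D n r \<omega>))\<^sup>2)"
proof -
  have "(\<Sum>r=1..t. avg_weight t r * (norm (y n r \<omega> - (\<Sum>q=1..t. avg_weight t q *\<^sub>R y n q \<omega>)))\<^sup>2)
      \<le> (\<Sum>r=1..t. avg_weight t r * (norm (y n r \<omega> - anc n \<omega>))\<^sup>2)"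
    by (rule weighted_sq_dist_to_mean_le[OF sum_avg_weight[OF t]])
  also have "\<dots> \<le> (\<Sum>r=1..t. avg_weight t r * (norm (D n r \<omega>))\<^sup>2)"
  proof (rule sum_mono)
    fix r assume "r \<in> {1..t}"
    then have "norm (y n r \<omega> - anc n \<omega>) \<le> norm (D n r \<omega>)"
      using s_01 by (auto simp: y_def intro!: mult_left_le_one_le)
    then show "avg_weight t r * (norm (y n r \<omega> - anc n \<omega>))\<^sup>2 \<le> avg_weight t r * (norm (D n r \<omega>))\<^sup>2"
      using avg_weight_nonneg[OF t] by (intro mult_left_mono power_mono) auto
  qed
  also have "\<dots> = normalizer t * (\<Sum>r=1..t. \<beta> ^ (t - r) * (norm (D n r \<omega>))\<^sup>2)"
    by (simp add: sum_distrib_left mult.assoc)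
  finally show ?thesis .
qed

lemma lambda_norm_ybar_le:
  assumes t: "1 \<le> t"
    and s_01: "\<forall>r\<in>{1..t}. s n r \<omega> \<in> {0..1}" and anchor_eq: "anchor x0 D J n \<omega> = anc n \<omega>"
  shows "lambda_norm gradF lam (ybar \<beta> x0 D s J n t \<omega>)
    \<le> normalizer t * norm (disc_grad n t \<omega>) + norm (\<Sum>r=1..t. avg_weight t r *\<^sub>R noise n r \<omega>)
      + lam * (normalizer t * (\<Sum>r=1..t. \<beta> ^ (t - r) * (norm (D n r \<omega>))\<^sup>2))"
proof -
  have "(\<Sum>r=1..t. avg_weight t r *\<^sub>R gradF (y n r \<omega>))
      = normalizer t *\<^sub>R disc_grad n t \<omega> - (\<Sum>r=1..t. avg_weight t r *\<^sub>R noise n r \<omega>)"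
    by (simp add: disc_grad_def noise_def scaleR_sum_right scaleR_diff_right sum_subtractf)
  then have "norm (\<Sum>r=1..t. avg_weight t r *\<^sub>R gradF (y n r \<omega>))
      \<le> normalizer t * norm (disc_grad n t \<omega>) + norm (\<Sum>r=1..t. avg_weight t r *\<^sub>R noise n r \<omega>)"
    using norm_triangle_ineq4[of "normalizer t *\<^sub>R disc_grad n t \<omega>"] normalizer_pos[OF t] by simp
  moreover have "lambda_norm gradF lam (ybar \<beta> x0 D s J n t \<omega>)
      \<le> norm (\<Sum>r=1..t. avg_weight t r *\<^sub>R gradF (y n r \<omega>))
        + lam * (\<Sum>r=1..t. avg_weight t r * (norm (y n r \<omega> - (\<Sum>q=1..t. avg_weight t q *\<^sub>R y n q \<omega>)))\<^sup>2)"
    unfolding ybar_eq_avg[OF anchor_eq] using avg_weight_nonneg[OF t] sum_avg_weight[OF t] lam_pos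
    by (intro lambda_norm_convex_combination_le[OF gradF_measurable]) auto
  moreover have "lam * (\<Sum>r=1..t. avg_weight t r * (norm (y n r \<omega> - (\<Sum>q=1..t. avg_weight t q *\<^sub>R y n q \<omega>)))\<^sup>2)
      \<le> lam * (normalizer t * (\<Sum>r=1..t. \<beta> ^ (t - r) * (norm (D n r \<omega>))\<^sup>2))"
    using spread_le[OF t s_01] lam_pos by (intro mult_left_mono) auto
  ultimately show ?thesis by linarith
qed

context
  fixes n t assumes n: "n \<in> {1..N}" and t: "t \<in> {1..T}"
begin

lemma in_range_if_le_t: "r \<in> {1..t} \<Longrightarrow> r \<in> {1..T}"
  using t by auto

lemma disc_grad_norm_integrable: "integrable M (\<lambda>\<omega>. norm (disc_grad n t \<omega>))"
  unfolding disc_grad_def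
  by (intro integrable_norm Bochner_Integration.integrable_sum integrable_scaleR_right g_int[OF n])
     (use t in auto)

lemma comparator_M[measurable]: "comparator n t \<in> borel_measurable M"
proof -
  have "disc_grad n t \<in> borel_measurable M"
    unfolding disc_grad_def
  proof (intro borel_measurable_sum borel_measurable_scaleR borel_measurable_const)
    show "g n r \<in> borel_measurable M" if "r \<in> {1..t}" for r
      using g_M[OF n in_range_if_le_t[OF that]] .
  qed
  then show ?thesis unfolding comparator_def by measurable
qed

lemma integral_regret_comparator_le:
  "(\<integral>\<omega>. regret \<beta> \<mu> g D n t (comparator n t) \<omega> \<partial>M) \<le> comparator_regret_bound"
proof -
  have comparator_sq: "integrable M (\<lambda>\<omega>. (norm (comparator n t \<omega>))\<^sup>2)"
    using norm_comparator_le radius_pos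
    by (intro integrable_const_bound[where B="radius\<^sup>2"]) (auto intro!: power_mono)
  have comparator_norm: "integrable M (\<lambda>\<omega>. norm (comparator n t \<omega>))"
    using norm_comparator_le by (intro integrable_const_bound[where B=radius]) auto
  have "(\<integral>\<omega>. regret \<beta> \<mu> g D n t (comparator n t) \<omega> \<partial>M)
      \<le> (\<integral>\<omega>. 2 * norm (comparator n t \<omega>) * (G + \<sigma>) / (\<beta> * sqrt (1 - \<beta>))
            + \<mu> / 2 * (norm (comparator n t \<omega>))\<^sup>2 \<partial>M)"
    by (rule regret_bound[OF n t comparator_M comparator_sq])
  also have "\<dots> \<le> (\<integral>\<omega>. comparator_regret_bound \<partial>M)"
  proof (rule integral_mono)
    fix \<omega>
    have "2 * norm (comparator n t \<omega>) * (G + \<sigma>) / (\<beta> * sqrt (1 - \<beta>))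
        \<le> 2 * radius * (G + \<sigma>) / (\<beta> * sqrt (1 - \<beta>))"
      using norm_comparator_le G_plus_sigma_pos beta_pos beta_lt_1
      by (intro divide_right_mono mult_right_mono) auto
    moreover have "\<mu> / 2 * (norm (comparator n t \<omega>))\<^sup>2 \<le> \<mu> / 2 * radius\<^sup>2"
      using norm_comparator_le mu_nonneg by (intro mult_left_mono power_mono) auto
    ultimately show "2 * norm (comparator n t \<omega>) * (G + \<sigma>) / (\<beta> * sqrt (1 - \<beta>))
        + \<mu> / 2 * (norm (comparator n t \<omega>))\<^sup>2 \<le> comparator_regret_bound"
      unfolding comparator_regret_bound_def by linarith
  qed (use comparator_sq comparator_norm in auto)
  finally show ?thesis by (simp add: prob_space)
qed

lemma discounted_progress_le:
  "(\<Sum>r=1..t. \<beta> ^ (t - r) * (\<integral>\<omega>. g n r \<omega> \<bullet> D n r \<omega> \<partial>M))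
   + \<mu> / 2 * (\<Sum>r=1..t. \<beta> ^ (t - r) * (\<integral>\<omega>. (norm (D n r \<omega>))\<^sup>2 \<partial>M))
   + radius * (\<integral>\<omega>. norm (disc_grad n t \<omega>) \<partial>M)
   \<le> comparator_regret_bound + \<mu> / 2 * (\<Sum>r=1..t. \<beta> ^ (t - r)) * radius\<^sup>2"
proof -
  define Z where "Z = (\<Sum>r=1..t. \<beta> ^ (t - r))"
  define L where "L \<omega> = (\<Sum>r=1..t. \<beta> ^ (t - r) * (g n r \<omega> \<bullet> D n r \<omega>))
      + \<mu> / 2 * (\<Sum>r=1..t. \<beta> ^ (t - r) * (norm (D n r \<omega>))\<^sup>2) + radius * norm (disc_grad n t \<omega>)" for \<omega>
  have inner_int: "integrable M (\<lambda>\<omega>. \<beta> ^ (t - r) * (g n r \<omega> \<bullet> D n r \<omega>))"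
    and sq_int: "integrable M (\<lambda>\<omega>. \<beta> ^ (t - r) * (norm (D n r \<omega>))\<^sup>2)" if "r \<in> {1..t}" for r
    using integrable_inner_g_D[OF n in_range_if_le_t] D_sq_int[OF n in_range_if_le_t] that by auto
  have inner_sum_int: "integrable M (\<lambda>\<omega>. \<Sum>r=1..t. \<beta> ^ (t - r) * (g n r \<omega> \<bullet> D n r \<omega>))"
    and sq_sum_int: "integrable M (\<lambda>\<omega>. \<Sum>r=1..t. \<beta> ^ (t - r) * (norm (D n r \<omega>))\<^sup>2)"
    using inner_int sq_int by auto
  then have L_int: "integrable M L"
    unfolding L_def using disc_grad_norm_integrable by auto
  have "(\<integral>\<omega>. L \<omega> \<partial>M) = (\<integral>\<omega>. (\<Sum>r=1..t. \<beta> ^ (t - r) * (g n r \<omega> \<bullet> D n r \<omega>)) \<partial>M)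
      + \<mu> / 2 * (\<integral>\<omega>. (\<Sum>r=1..t. \<beta> ^ (t - r) * (norm (D n r \<omega>))\<^sup>2) \<partial>M)
      + radius * (\<integral>\<omega>. norm (disc_grad n t \<omega>) \<partial>M)"
    unfolding L_def using inner_sum_int sq_sum_int disc_grad_norm_integrable by simp
  also have "(\<integral>\<omega>. (\<Sum>r=1..t. \<beta> ^ (t - r) * (g n r \<omega> \<bullet> D n r \<omega>)) \<partial>M)
      = (\<Sum>r=1..t. \<beta> ^ (t - r) * (\<integral>\<omega>. g n r \<omega> \<bullet> D n r \<omega> \<partial>M))"
    using inner_int by (subst Bochner_Integration.integral_sum) auto
  also have "(\<integral>\<omega>. (\<Sum>r=1..t. \<beta> ^ (t - r) * (norm (D n r \<omega>))\<^sup>2) \<partial>M)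
      = (\<Sum>r=1..t. \<beta> ^ (t - r) * (\<integral>\<omega>. (norm (D n r \<omega>))\<^sup>2 \<partial>M))"
    using sq_int by (subst Bochner_Integration.integral_sum) auto
  finally have integral_L: "(\<integral>\<omega>. L \<omega> \<partial>M) = (\<Sum>r=1..t. \<beta> ^ (t - r) * (\<integral>\<omega>. g n r \<omega> \<bullet> D n r \<omega> \<partial>M))
      + \<mu> / 2 * (\<Sum>r=1..t. \<beta> ^ (t - r) * (\<integral>\<omega>. (norm (D n r \<omega>))\<^sup>2 \<partial>M))
      + radius * (\<integral>\<omega>. norm (disc_grad n t \<omega>) \<partial>M)" .
  have comparator_sq: "integrable M (\<lambda>\<omega>. (norm (comparator n t \<omega>))\<^sup>2)"
    using norm_comparator_le radius_pos
    by (intro integrable_const_bound[where B="radius\<^sup>2"]) (auto intro!: power_mono)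
  have regret_eq: "regret \<beta> \<mu> g D n t (comparator n t) = (\<lambda>\<omega>. L \<omega> - \<mu> / 2 * Z * (norm (comparator n t \<omega>))\<^sup>2)"
    unfolding L_def Z_def regret_comparator_eq by simp
  have "(\<integral>\<omega>. (norm (comparator n t \<omega>))\<^sup>2 \<partial>M) \<le> (\<integral>\<omega>. radius\<^sup>2 \<partial>M)"
    using comparator_sq norm_comparator_le radius_pos by (intro integral_mono) (auto intro!: power_mono)
  moreover have "0 \<le> \<mu> / 2 * Z"
    unfolding Z_def using mu_nonneg beta_pos by (auto intro!: sum_nonneg mult_nonneg_nonneg)
  ultimately have "\<mu> / 2 * Z * (\<integral>\<omega>. (norm (comparator n t \<omega>))\<^sup>2 \<partial>M) \<le> \<mu> / 2 * Z * radius\<^sup>2"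
    by (simp add: prob_space mult_left_mono)
  moreover have "(\<integral>\<omega>. regret \<beta> \<mu> g D n t (comparator n t) \<omega> \<partial>M)
      = (\<integral>\<omega>. L \<omega> \<partial>M) - \<mu> / 2 * Z * (\<integral>\<omega>. (norm (comparator n t \<omega>))\<^sup>2 \<partial>M)"
    unfolding regret_eq using L_int comparator_sq by simp
  ultimately show ?thesis
    using integral_regret_comparator_le unfolding integral_L Z_def by linarith
qed

lemma integral_lambda_norm_ybar_le:
  "(\<integral>\<omega>. lambda_norm gradF lam (ybar \<beta> x0 D s J n t \<omega>) \<partial>M)
   \<le> normalizer t * (\<integral>\<omega>. norm (disc_grad n t \<omega>) \<partial>M)
     + lam * (normalizer t * (\<Sum>r=1..t. \<beta> ^ (t - r) * (\<integral>\<omega>. (norm (D n r \<omega>))\<^sup>2 \<partial>M)))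
     + \<sigma> * sqrt (\<Sum>r=1..t. (avg_weight t r)\<^sup>2)"
proof -
  have t1: "1 \<le> t" using t by auto
  define B where "B \<omega> = normalizer t * norm (disc_grad n t \<omega>) + norm (\<Sum>r=1..t. avg_weight t r *\<^sub>R noise n r \<omega>)
      + lam * (normalizer t * (\<Sum>r=1..t. \<beta> ^ (t - r) * (norm (D n r \<omega>))\<^sup>2))" for \<omega>
  have noise_meas: "noise n r \<in> borel_measurable M"
    and noise_sq: "integrable M (\<lambda>\<omega>. (norm (noise n r \<omega>))\<^sup>2)"
    and noise_var: "(\<integral>\<omega>. (norm (noise n r \<omega>))\<^sup>2 \<partial>M) \<le> \<sigma>\<^sup>2" if "r \<in> {1..t}" for r
    using noise_M noise_sq_integrable integral_noise_sq_le n in_range_if_le_t[OF that] by auto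
  have noise_orth: "(\<integral>\<omega>. noise n r \<omega> \<bullet> noise n q \<omega> \<partial>M) = 0"
    if "r \<in> {1..t}" "q \<in> {1..t}" "r \<noteq> q" for r q
    using integral_noise_orthogonal[OF n in_range_if_le_t in_range_if_le_t] that by auto
  note noise = integral_norm_sum_orthogonal_le[where I="{1..t}" and \<xi>="noise n" and w="avg_weight t",
      OF finite_atLeastAtMost noise_meas noise_sq noise_orth
      noise_var sigma_nonneg]
  have sq_int: "integrable M (\<lambda>\<omega>. \<beta> ^ (t - r) * (norm (D n r \<omega>))\<^sup>2)" if "r \<in> {1..t}" for r
    using D_sq_int[OF n in_range_if_le_t[OF that]] by simp
  then have sq_sum_int: "integrable M (\<lambda>\<omega>. \<Sum>r=1..t. \<beta> ^ (t - r) * (norm (D n r \<omega>))\<^sup>2)"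
    by auto
  have B_int: "integrable M B"
    unfolding B_def using disc_grad_norm_integrable noise(1) sq_sum_int by auto
  have "(\<integral>\<omega>. B \<omega> \<partial>M) = normalizer t * (\<integral>\<omega>. norm (disc_grad n t \<omega>) \<partial>M)
      + (\<integral>\<omega>. norm (\<Sum>r=1..t. avg_weight t r *\<^sub>R noise n r \<omega>) \<partial>M)
      + lam * (normalizer t * (\<integral>\<omega>. (\<Sum>r=1..t. \<beta> ^ (t - r) * (norm (D n r \<omega>))\<^sup>2) \<partial>M))"
    unfolding B_def using disc_grad_norm_integrable noise(1) sq_sum_int by simp
  also have "(\<integral>\<omega>. (\<Sum>r=1..t. \<beta> ^ (t - r) * (norm (D n r \<omega>))\<^sup>2) \<partial>M)
      = (\<Sum>r=1..t. \<beta> ^ (t - r) * (\<integral>\<omega>. (norm (D n r \<omega>))\<^sup>2 \<partial>M))"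
    using sq_int by (subst Bochner_Integration.integral_sum) auto
  finally have integral_B: "(\<integral>\<omega>. B \<omega> \<partial>M) \<le> normalizer t * (\<integral>\<omega>. norm (disc_grad n t \<omega>) \<partial>M)
      + lam * (normalizer t * (\<Sum>r=1..t. \<beta> ^ (t - r) * (\<integral>\<omega>. (norm (D n r \<omega>))\<^sup>2 \<partial>M)))
      + \<sigma> * sqrt (\<Sum>r=1..t. (avg_weight t r)\<^sup>2)"
    using noise(2) by linarith
  have "AE \<omega> in M. \<forall>r\<in>{1..t}. s n r \<omega> \<in> {0..1}"
    using AE_s_in_01[OF n in_range_if_le_t] by (subst AE_finite_all) auto
  then have "AE \<omega> in M. lambda_norm gradF lam (ybar \<beta> x0 D s J n t \<omega>) \<le> B \<omega>"
    using AE_anchor_eq_anc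
    by eventually_elim (use n lambda_norm_ybar_le[OF t1] in \<open>auto simp: B_def\<close>)
  moreover have "0 \<le> B \<omega>" for \<omega>
    unfolding B_def using normalizer_pos[OF t1] lam_pos beta_pos
    by (intro add_nonneg_nonneg mult_nonneg_nonneg sum_nonneg) auto
  ultimately have "(\<integral>\<omega>. lambda_norm gradF lam (ybar \<beta> x0 D s J n t \<omega>) \<partial>M) \<le> (\<integral>\<omega>. B \<omega> \<partial>M)"
    by (intro integral_mono_AE'[OF B_int]) auto
  then show ?thesis
    using integral_B by linarith
qed

lemma round_bound:
  "(\<integral>\<omega>. lambda_norm gradF lam (ybar \<beta> x0 D s J n t \<omega>) \<partial>M)
   \<le> normalizer t * (comparator_regret_bound + \<mu> / 2 * (\<Sum>r=1..t. \<beta> ^ (t - r)) * radius\<^sup>2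
        - (\<Sum>r=1..t. \<beta> ^ (t - r) * (\<integral>\<omega>. g n r \<omega> \<bullet> D n r \<omega> \<partial>M))) / radius
     + \<sigma> * sqrt (\<Sum>r=1..t. (avg_weight t r)\<^sup>2)"
proof -
  define h where "h = (\<integral>\<omega>. norm (disc_grad n t \<omega>) \<partial>M)"
  define Q where "Q = (\<Sum>r=1..t. \<beta> ^ (t - r) * (\<integral>\<omega>. (norm (D n r \<omega>))\<^sup>2 \<partial>M))"
  have "radius * (h + lam * Q)
      \<le> comparator_regret_bound + \<mu> / 2 * (\<Sum>r=1..t. \<beta> ^ (t - r)) * radius\<^sup>2
        - (\<Sum>r=1..t. \<beta> ^ (t - r) * (\<integral>\<omega>. g n r \<omega> \<bullet> D n r \<omega> \<partial>M))"
    using discounted_progress_le unfolding h_def Q_def mu_half_eq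
    by (simp add: algebra_simps)
  then have "h + lam * Q
      \<le> (comparator_regret_bound + \<mu> / 2 * (\<Sum>r=1..t. \<beta> ^ (t - r)) * radius\<^sup>2
        - (\<Sum>r=1..t. \<beta> ^ (t - r) * (\<integral>\<omega>. g n r \<omega> \<bullet> D n r \<omega> \<partial>M))) / radius"
    using radius_pos by (simp add: field_simps)
  then have "normalizer t * (h + lam * Q)
      \<le> normalizer t * ((comparator_regret_bound + \<mu> / 2 * (\<Sum>r=1..t. \<beta> ^ (t - r)) * radius\<^sup>2
        - (\<Sum>r=1..t. \<beta> ^ (t - r) * (\<integral>\<omega>. g n r \<omega> \<bullet> D n r \<omega> \<partial>M))) / radius)"
    using normalizer_pos[of t] t by (intro mult_left_mono) auto
  moreover have "normalizer t * (h + lam * Q) = normalizer t * h + lam * (normalizer t * Q)"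
    by (simp add: algebra_simps)
  ultimately show ?thesis
    using integral_lambda_norm_ybar_le unfolding h_def Q_def by simp
qed

end

definition "tau_weight t = (if t < T then 1 - \<beta> else 1)"

definition "noise_factor = (\<Sum>t=1..T. tau_prob \<beta> T t * sqrt (\<Sum>r=1..t. (avg_weight t r)\<^sup>2))"

lemma tau_weight_nonneg: "0 \<le> tau_weight t"
  unfolding tau_weight_def using beta_lt_1 by simp

lemma sum_tau_weight_discounted:
  "(\<Sum>t=1..T. tau_weight t * (\<Sum>r=1..t. \<beta> ^ (t - r) * a r)) = (\<Sum>r=1..T. a r)"
  unfolding tau_weight_def using sum_eq_weighted_discounted_sums[OF T_pos] by simp

lemma sum_tau_weight: "(\<Sum>t=1..T. tau_weight t) = (1 - \<beta>) * (real T - 1) + 1"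
proof -
  have "{1..T} = insert T {1..<T}" using T_pos by auto
  then have "(\<Sum>t=1..T. tau_weight t) = (\<Sum>t=1..<T. 1 - \<beta>) + 1"
    by (simp add: tau_weight_def)
  then show ?thesis using T_pos by (simp add: of_nat_diff)
qed

lemma tau_prob_normalizer: "t \<in> {1..T} \<Longrightarrow> tau_prob \<beta> T t * normalizer t = tau_weight t / T"
  using beta_pow_lt_1[of t] beta_lt_1 T_pos
  by (auto simp: tau_prob_def tau_weight_def normalizer_def field_simps)

lemma tau_prob_nonneg: "t \<in> {1..T} \<Longrightarrow> 0 \<le> tau_prob \<beta> T t"
  using beta_pow_lt_1[of t] beta_pow_lt_1[of T] beta_lt_1 T_pos
  by (auto simp: tau_prob_def)

lemma normalizer_ge: "1 \<le> t \<Longrightarrow> 1 - \<beta> \<le> normalizer t"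
  using beta_pow_lt_1[of t] beta_pos beta_lt_1
  by (simp add: normalizer_def le_divide_eq mult_le_cancel_left1)

lemma sum_sq_avg_weight_le: "1 \<le> t \<Longrightarrow> (\<Sum>r=1..t. (avg_weight t r)\<^sup>2) \<le> normalizer t"
proof -
  assume t: "1 \<le> t"
  have "(\<Sum>r=1..t. (avg_weight t r)\<^sup>2) \<le> (\<Sum>r=1..t. normalizer t * avg_weight t r)"
  proof (rule sum_mono)
    fix r
    have "\<beta> ^ (t - r) * \<beta> ^ (t - r) \<le> \<beta> ^ (t - r)"
      using beta_pos beta_lt_1 by (simp add: mult_left_le_one_le power_le_one)
    then show "(avg_weight t r)\<^sup>2 \<le> normalizer t * avg_weight t r"
      using normalizer_pos[OF t] by (simp add: power2_eq_square mult_left_mono algebra_simps)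
  qed
  also have "\<dots> = normalizer t"
    using normalizer_sum_discounted[OF t] by (simp add: sum_distrib_left[symmetric])
  finally show ?thesis .
qed

lemma tau_prob_noise_term_le:
  assumes t: "t \<in> {1..T}"
  shows "tau_prob \<beta> T t * sqrt (\<Sum>r=1..t. (avg_weight t r)\<^sup>2) \<le> (if t < T then kappa / T else kappa)"
proof -
  have t1: "1 \<le> t" and T0: "0 < real T" using t by auto
  have \<rho>: "0 < normalizer t" using normalizer_pos[OF t1] .
  have kappa_le: "kappa \<le> sqrt (normalizer t)"
    using real_sqrt_le_mono[OF normalizer_ge[OF t1]] one_minus_beta kappa_pos by simp
  have "tau_prob \<beta> T t * sqrt (\<Sum>r=1..t. (avg_weight t r)\<^sup>2) \<le> tau_prob \<beta> T t * sqrt (normalizer t)"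
    using sum_sq_avg_weight_le[OF t1] tau_prob_nonneg[OF t] by (intro mult_left_mono) auto
  also have "\<dots> = tau_weight t / (sqrt (normalizer t) * T)"
    using tau_prob_normalizer[OF t] \<rho> T0
    by (simp add: field_simps)
  also have "\<dots> \<le> tau_weight t / (kappa * T)"
    using kappa_le kappa_pos T0 \<rho> tau_weight_nonneg
    by (intro divide_left_mono mult_right_mono mult_pos_pos) auto
  also have "\<dots> \<le> (if t < T then kappa / T else kappa)"
  proof (cases "t < T")
    case True
    then show ?thesis using kappa_pos one_minus_beta by (simp add: tau_weight_def power2_eq_square)
  next
    case False
    have "1 \<le> kappa * (kappa * real T)"
      using T_ge_inverse_kappa_sq kappa_pos by (simp add: field_simps power2_eq_square)
    then show ?thesis using False kappa_pos T0 by (simp add: tau_weight_def field_simps)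
  qed
  finally show ?thesis .
qed

lemma noise_factor_le: "noise_factor \<le> 2 * kappa"
proof -
  have "noise_factor \<le> (\<Sum>t=1..T. if t < T then kappa / T else kappa)"
    unfolding noise_factor_def by (rule sum_mono) (rule tau_prob_noise_term_le)
  also have "\<dots> = (real T - 1) * kappa / T + kappa"
  proof -
    have "{1..T} = insert T {1..<T}" using T_pos by auto
    then show ?thesis using T_pos by (simp add: of_nat_diff)
  qed
  also have "\<dots> \<le> 2 * kappa"
    using kappa_pos T_pos by (simp add: field_simps)
  finally show ?thesis .
qed

lemma sum_decrease_eq_progress:
  assumes n: "n \<in> {1..N}"
  shows "(\<Sum>r=1..T. \<integral>\<omega>. F (anc n \<omega>) - F (anc n \<omega> + D n r \<omega>) \<partial>M)
    = - (\<Sum>r=1..T. \<integral>\<omega>. g n r \<omega> \<bullet> D n r \<omega> \<partial>M)"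
proof -
  have "(\<integral>\<omega>. F (anc n \<omega>) - F (anc n \<omega> + D n r \<omega>) \<partial>M) = - (\<integral>\<omega>. g n r \<omega> \<bullet> D n r \<omega> \<partial>M)"
    if "r \<in> {1..T}" for r
  proof -
    have "(\<integral>\<omega>. F (anc n \<omega>) - F (anc n \<omega> + D n r \<omega>) \<partial>M)
        = (\<integral>\<omega>. - (F (anc n \<omega> + D n r \<omega>) - F (anc n \<omega>)) \<partial>M)"
      by simp
    then show ?thesis
      unfolding Bochner_Integration.integral_minus integral_increment_eq_inner_g_D(2)[OF n that] .
  qed
  then show ?thesis by (simp add: sum_negf[symmetric])
qed

lemma epoch_bound:
  assumes n: "n \<in> {1..N}"
  shows "(\<Sum>t=1..T. tau_prob \<beta> T t * (\<integral>\<omega>. lambda_norm gradF lam (ybar \<beta> x0 D s J n t \<omega>) \<partial>M))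
    \<le> ((\<Sum>t=1..T. tau_weight t) * comparator_regret_bound + \<mu> / 2 * radius\<^sup>2 * T
        + (\<Sum>r=1..T. \<integral>\<omega>. F (anc n \<omega>) - F (anc n \<omega> + D n r \<omega>) \<partial>M)) / (radius * T)
      + \<sigma> * noise_factor"
proof -
  define e where "e r = (\<integral>\<omega>. g n r \<omega> \<bullet> D n r \<omega> \<partial>M)" for r
  define C where "C t = comparator_regret_bound + \<mu> / 2 * (\<Sum>r=1..t. \<beta> ^ (t - r) * 1) * radius\<^sup>2
      - (\<Sum>r=1..t. \<beta> ^ (t - r) * e r)" for t
  define nz where "nz t = sqrt (\<Sum>r=1..t. (avg_weight t r)\<^sup>2)" for t
  have "(\<Sum>t=1..T. tau_prob \<beta> T t * (\<integral>\<omega>. lambda_norm gradF lam (ybar \<beta> x0 D s J n t \<omega>) \<partial>M))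
      \<le> (\<Sum>t=1..T. tau_prob \<beta> T t * (normalizer t * C t / radius + \<sigma> * nz t))"
    using round_bound[OF n] tau_prob_nonneg
    by (intro sum_mono mult_left_mono) (auto simp: C_def e_def nz_def)
  also have "\<dots> = (\<Sum>t=1..T. tau_weight t * C t / (radius * T) + \<sigma> * (tau_prob \<beta> T t * nz t))"
  proof (rule sum.cong[OF refl])
    fix t assume "t \<in> {1..T}"
    then have weight: "tau_prob \<beta> T t * normalizer t = tau_weight t / T"
      by (rule tau_prob_normalizer)
    have "tau_prob \<beta> T t * (normalizer t * C t / radius + \<sigma> * nz t)
        = (tau_prob \<beta> T t * normalizer t) * C t / radius + \<sigma> * (tau_prob \<beta> T t * nz t)"
      by (simp add: algebra_simps)
    then show "tau_prob \<beta> T t * (normalizer t * C t / radius + \<sigma> * nz t)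
        = tau_weight t * C t / (radius * T) + \<sigma> * (tau_prob \<beta> T t * nz t)"
      unfolding weight by simp
  qed
  also have "\<dots> = (\<Sum>t=1..T. tau_weight t * C t) / (radius * T) + \<sigma> * noise_factor"
    by (simp add: noise_factor_def nz_def sum.distrib sum_divide_distrib sum_distrib_left)
  also have "(\<Sum>t=1..T. tau_weight t * C t)
      = (\<Sum>t=1..T. tau_weight t * comparator_regret_bound
          + \<mu> / 2 * radius\<^sup>2 * (tau_weight t * (\<Sum>r=1..t. \<beta> ^ (t - r) * 1))
          - tau_weight t * (\<Sum>r=1..t. \<beta> ^ (t - r) * e r))"
    unfolding C_def by (intro sum.cong refl) (simp add: algebra_simps)
  also have "\<dots> = (\<Sum>t=1..T. tau_weight t) * comparator_regret_bound + \<mu> / 2 * radius\<^sup>2 * T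
      - (\<Sum>r=1..T. e r)"
    using sum_tau_weight_discounted[of "\<lambda>_. 1"]
    by (simp only: sum_subtractf sum.distrib sum_distrib_left[symmetric] sum_distrib_right[symmetric]
        sum_tau_weight_discounted) simp
  finally show ?thesis using sum_decrease_eq_progress[OF n] by (simp add: e_def)
qed

lemma norm_anc_minus_x0_le:
  "1 \<le> n \<Longrightarrow> norm (anc n \<omega> - x0) \<le> (\<Sum>m=1..<n. \<Sum>t=1..T. norm (D m t \<omega>))"
proof (induction n rule: nat_induct_at_least)
  case (Suc n)
  have "norm (D n (Jc n \<omega>) \<omega>) \<le> (\<Sum>t=1..T. norm (D n t \<omega>))"
    using Jc_in_range[of n \<omega>] by (intro member_le_sum) auto
  moreover have "norm (anc (Suc n) \<omega> - x0) \<le> norm (anc n \<omega> - x0) + norm (D n (Jc n \<omega>) \<omega>)"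
    using anc_Suc[OF Suc(1)] norm_triangle_ineq[of "anc n \<omega> - x0" "D n (Jc n \<omega>) \<omega>"]
    by (simp add: algebra_simps)
  ultimately show ?case using Suc by simp
qed (simp add: anc_1)

lemma F_anc_integrable: "n \<in> {1..N} \<Longrightarrow> integrable M (\<lambda>\<omega>. F (anc n \<omega>))"
proof -
  assume n: "n \<in> {1..N}"
  have T1: "1 \<in> {1..T}" using T_pos by simp
  define B where "B \<omega> = (\<Sum>m=1..<n. \<Sum>t=1..T. norm (D m t \<omega>))" for \<omega>
  show ?thesis
  proof (rule Bochner_Integration.integrable_bound[where f="\<lambda>\<omega>. \<bar>F x0\<bar> + G * B \<omega>"])
    have "integrable M (\<lambda>\<omega>. norm (D m t \<omega>))" if "m \<in> {1..<n}" "t \<in> {1..T}" for m t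
      using D_norm_integrable that n by auto
    then show "integrable M (\<lambda>\<omega>. \<bar>F x0\<bar> + G * B \<omega>)"
      unfolding B_def by (intro Bochner_Integration.integrable_add integrable_mult_right
          Bochner_Integration.integrable_sum) auto
    show "(\<lambda>\<omega>. F (anc n \<omega>)) \<in> borel_measurable M"
      using anc_M[OF n T1] by measurable
    show "AE \<omega> in M. norm (F (anc n \<omega>)) \<le> norm (\<bar>F x0\<bar> + G * B \<omega>)"
    proof (rule AE_I2)
      fix \<omega>
      have "\<bar>F (anc n \<omega>) - F x0\<bar> \<le> G * norm (anc n \<omega> - x0)"
        by (rule abs_diff_le_if_gradient_bounded[OF integral_identity grad_bound])
      also have "\<dots> \<le> G * B \<omega>"
        unfolding B_def using norm_anc_minus_x0_le[of n \<omega>] n G_nonneg by (intro mult_left_mono) auto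
      finally show "norm (F (anc n \<omega>)) \<le> norm (\<bar>F x0\<bar> + G * B \<omega>)" by simp
    qed
  qed
qed

lemma F_anc_plus_D_integrable:
  assumes n: "n \<in> {1..N}" and t: "t \<in> {1..T}"
  shows "integrable M (\<lambda>\<omega>. F (anc n \<omega> + D n t \<omega>))"
proof -
  have "integrable M (\<lambda>\<omega>. (F (anc n \<omega> + D n t \<omega>) - F (anc n \<omega>)) + F (anc n \<omega>))"
    using integral_increment_eq_inner_g_D(1)[OF n t] F_anc_integrable[OF n]
    by (rule Bochner_Integration.integrable_add)
  then show ?thesis by simp
qed

lemma sum_integral_F_epoch_iterates:
  assumes n: "n \<in> {1..<N}"
  shows "(\<Sum>r=1..T. \<integral>\<omega>. F (anc n \<omega> + D n r \<omega>) \<partial>M) = real T * (\<integral>\<omega>. F (anc (Suc n) \<omega>) \<partial>M)"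
proof -
  have nN: "n \<in> {1..N}" and Suc_n: "Suc n \<in> {1..N}" and T1: "1 \<in> {1..T}" using n T_pos by auto
  have iterate_meas: "(\<lambda>\<omega>. F (anc n \<omega> + D n r \<omega>)) \<in> borel_measurable (Fpre n (Suc T))"
    if r: "r \<in> {1..T}" for r
  proof -
    have "anc n \<in> borel_measurable (Fpre n (Suc T))" "D n r \<in> borel_measurable (Fpre n (Suc T))"
      using n r by (auto intro!: measurable_Fpre_mono[OF nN _ _ _ anc_measurable]
          measurable_Fpre_mono[OF nN _ _ _ D_meas[OF nN r]])
    then show ?thesis by measurable
  qed
  have "(\<integral>\<omega>. F (anc (Suc n) \<omega>) \<partial>M) = (\<Sum>r=1..T. \<integral>\<omega>. F (anc n \<omega> + D n r \<omega>) \<partial>M) / T"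
  proof (rule integral_at_uniform_index[OF _ T_pos iterate_meas F_anc_plus_D_integrable[OF nN]
        J_measurable[OF n] J_unif[OF n] J_indep[OF n]])
    show "subalgebra M (Fpre n (Suc T))" using sub_pre nN by auto
    show "(\<lambda>\<omega>. F (anc (Suc n) \<omega>)) \<in> borel_measurable M" using anc_M[OF Suc_n T1] by measurable
    show "F (anc (Suc n) \<omega>) = F (anc n \<omega> + D n (J n \<omega>) \<omega>)" if "J n \<omega> \<in> {1..T}" for \<omega>
      using anc_Suc[of n \<omega>] n that by (simp add: Jc_def)
  qed
  then show ?thesis using T_pos by simp
qed

lemma sum_epoch_decrease_le:
  "(\<Sum>n=1..N. \<Sum>r=1..T. \<integral>\<omega>. F (anc n \<omega>) - F (anc n \<omega> + D n r \<omega>) \<partial>M) \<le> real T * (F x0 - Inf (range F))"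
proof -
  define a where "a n = (\<integral>\<omega>. F (anc n \<omega>) \<partial>M)" for n
  define b where "b n = (\<Sum>r=1..T. \<integral>\<omega>. F (anc n \<omega> + D n r \<omega>) \<partial>M)" for n
  have epoch: "(\<Sum>r=1..T. \<integral>\<omega>. F (anc n \<omega>) - F (anc n \<omega> + D n r \<omega>) \<partial>M) = real T * a n - b n"
    if n: "n \<in> {1..N}" for n
    using F_anc_integrable[OF n] F_anc_plus_D_integrable[OF n]
    by (simp add: a_def b_def sum_subtractf)
  have telescope: "(\<Sum>n=1..K. real T * a n - b n) = real T * a 1 - b K" if "1 \<le> K" "K \<le> N" for K
    using that
  proof (induction K rule: nat_induct_at_least)
    case (Suc K)
    then have "b K = real T * a (Suc K)"
      unfolding a_def b_def by (intro sum_integral_F_epoch_iterates) auto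
    then show ?case using Suc by simp
  qed simp
  have "real T * Inf (range F) \<le> b N"
  proof -
    have "Inf (range F) \<le> (\<integral>\<omega>. F (anc N \<omega> + D N r \<omega>) \<partial>M)" if "r \<in> {1..T}" for r
      using integral_mono[OF _ F_anc_plus_D_integrable[OF _ that], of "\<lambda>_. Inf (range F)" N]
        N_pos F_bdd by (simp add: prob_space cInf_lower)
    then show ?thesis
      unfolding b_def using sum_mono[of "{1..T}" "\<lambda>_. Inf (range F)"] by fastforce
  qed
  moreover have "(\<Sum>n=1..N. \<Sum>r=1..T. \<integral>\<omega>. F (anc n \<omega>) - F (anc n \<omega> + D n r \<omega>) \<partial>M)
      = real T * a 1 - b N"
  proof -
    have "(\<Sum>n=1..N. \<Sum>r=1..T. \<integral>\<omega>. F (anc n \<omega>) - F (anc n \<omega> + D n r \<omega>) \<partial>M)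
        = (\<Sum>n=1..N. real T * a n - b n)"
      using epoch by (rule sum.cong[OF refl])
    then show ?thesis using telescope[of N] N_pos by simp
  qed
  moreover have "a 1 = F x0" unfolding a_def by (simp add: anc_1 prob_space)
  ultimately show ?thesis by (simp add: algebra_simps)
qed

lemma bias_term_le:
  "((\<Sum>t=1..T. tau_weight t) * comparator_regret_bound + \<mu> / 2 * radius\<^sup>2 * T) / (radius * T)
    \<le> \<epsilon> + 16/21 * \<epsilon> + \<epsilon> / 2"
proof -
  have T0: "0 < real T" using T_pos by simp
  have mu_radius: "\<mu> / 2 * radius = \<epsilon>" using mu_half_eq lam_radius_sq by (simp add: power2_eq_square)
  have kappa_G_sigma: "kappa * (G + \<sigma>) = \<epsilon> / 7"
    unfolding kappa_def using G_plus_sigma_pos by (simp add: field_simps del: distrib_left distrib_right)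
  have regret_radius: "comparator_regret_bound / radius = 2 * (G + \<sigma>) / (\<beta> * kappa) + \<epsilon>"
    unfolding comparator_regret_bound_def one_minus_beta using radius_pos mu_radius kappa_pos
    by (simp add: field_simps power2_eq_square)
  have weight_avg: "(\<Sum>t=1..T. tau_weight t) / T \<le> 2 * kappa\<^sup>2"
  proof -
    have "1 \<le> kappa\<^sup>2 * real T"
      using T_ge_inverse_kappa_sq kappa_pos by (simp add: field_simps)
    then have "(\<Sum>t=1..T. tau_weight t) \<le> 2 * kappa\<^sup>2 * real T"
      unfolding sum_tau_weight one_minus_beta by (simp add: algebra_simps add_increasing)
    then show ?thesis using T0 by (simp add: field_simps)
  qed
  have "((\<Sum>t=1..T. tau_weight t) * comparator_regret_bound + \<mu> / 2 * radius\<^sup>2 * T) / (radius * T)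
      = ((\<Sum>t=1..T. tau_weight t) / T) * (comparator_regret_bound / radius) + \<mu> / 2 * radius"
    using radius_pos T0 by (simp add: field_simps power2_eq_square)
  also have "\<dots> \<le> 2 * kappa\<^sup>2 * (comparator_regret_bound / radius) + \<epsilon>"
    using weight_avg regret_radius G_plus_sigma_pos beta_pos kappa_pos eps_pos mu_radius
    by (intro add_mono mult_right_mono) auto
  also have "\<dots> = 4 * (kappa * (G + \<sigma>)) / \<beta> + 2 * kappa\<^sup>2 * \<epsilon> + \<epsilon>"
    unfolding regret_radius using kappa_pos beta_pos by (simp add: field_simps power2_eq_square)
  also have "\<dots> \<le> 16/21 * \<epsilon> + \<epsilon> / 2 + \<epsilon>"
  proof -
    have "4 * (\<epsilon> / 7) / \<beta> \<le> 16/21 * \<epsilon>"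
      using beta_ge_3_4 eps_pos by (simp add: field_simps)
    moreover have "2 * kappa\<^sup>2 * \<epsilon> \<le> \<epsilon> / 2"
    proof -
      have "kappa\<^sup>2 \<le> (1/2)\<^sup>2"
        using kappa_pos kappa_le_half by (intro power_mono) auto
      then show ?thesis using mult_right_mono[of "kappa\<^sup>2" "1/4" \<epsilon>] eps_pos by (simp add: power_divide)
    qed
    ultimately show ?thesis
      unfolding kappa_G_sigma by linarith
  qed
  finally show ?thesis by simp
qed

lemma noise_term_le: "\<sigma> * noise_factor \<le> 2/7 * \<epsilon>"
proof -
  have "\<sigma> * noise_factor \<le> \<sigma> * (2 * kappa)"
    using noise_factor_le sigma_nonneg by (rule mult_left_mono)
  also have "\<dots> = 2/7 * (\<sigma> / (G + \<sigma>)) * \<epsilon>"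
    unfolding kappa_def using G_plus_sigma_pos by (simp add: field_simps)
  also have "\<dots> \<le> 2/7 * \<epsilon>"
    using G_plus_sigma_pos G_nonneg sigma_nonneg eps_pos by (simp add: field_simps)
  finally show ?thesis .
qed

lemma decrease_term_le:
  assumes "real N \<ge> 4 * (F x0 - Inf (range F)) * sqrt lam * \<epsilon> powr (-3/2)"
  shows "(F x0 - Inf (range F)) / (real N * radius) \<le> \<epsilon> / 4"
proof -
  define \<Delta> where "\<Delta> = F x0 - Inf (range F)"
  have "0 \<le> \<Delta>" unfolding \<Delta>_def using F_bdd by (simp add: cInf_lower)
  have "\<epsilon> powr (-3/2) * sqrt \<epsilon> = \<epsilon> powr (-1)"
    using eps_pos by (simp add: powr_half_sqrt[symmetric] powr_add[symmetric])
  then have "\<epsilon> powr (-3/2) * sqrt \<epsilon> = 1 / \<epsilon>"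
    using eps_pos by (simp add: powr_minus inverse_eq_divide)
  then have "4 * \<Delta> * sqrt lam * \<epsilon> powr (-3/2) * radius = 4 * \<Delta> / \<epsilon>"
    unfolding radius_def using lam_pos eps_pos by (simp add: field_simps)
  then have "4 * \<Delta> / \<epsilon> \<le> real N * radius"
    using mult_right_mono[OF assms less_imp_le[OF radius_pos]] unfolding \<Delta>_def by simp
  then show ?thesis
    using \<open>0 \<le> \<Delta>\<close> eps_pos radius_pos N_pos unfolding \<Delta>_def[symmetric]
    by (simp add: field_simps)
qed

lemma average_bound:
  "(1 / real N) * (\<Sum>n = 1..N. \<Sum>t = 1..T.
      tau_prob \<beta> T t * (\<integral>\<omega>. lambda_norm gradF lam (ybar \<beta> x0 D s J n t \<omega>) \<partial>M))
   \<le> ((\<Sum>t=1..T. tau_weight t) * comparator_regret_bound + \<mu> / 2 * radius\<^sup>2 * T) / (radius * T)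
     + \<sigma> * noise_factor + (F x0 - Inf (range F)) / (real N * radius)"
proof -
  define B where "B = ((\<Sum>t=1..T. tau_weight t) * comparator_regret_bound + \<mu> / 2 * radius\<^sup>2 * T)
      / (radius * T) + \<sigma> * noise_factor"
  define \<Delta> where "\<Delta> = F x0 - Inf (range F)"
  define \<Phi> where "\<Phi> n = (\<Sum>r=1..T. \<integral>\<omega>. F (anc n \<omega>) - F (anc n \<omega> + D n r \<omega>) \<partial>M)" for n
  have T0: "0 < real T" and N0: "0 < real N" using T_pos N_pos by auto
  have "(\<Sum>n = 1..N. \<Sum>t = 1..T.
            tau_prob \<beta> T t * (\<integral>\<omega>. lambda_norm gradF lam (ybar \<beta> x0 D s J n t \<omega>) \<partial>M))
      \<le> (\<Sum>n = 1..N. B + \<Phi> n / (radius * T))"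
  proof (rule sum_mono)
    fix n assume "n \<in> {1..N}"
    from epoch_bound[OF this] show "(\<Sum>t = 1..T. tau_prob \<beta> T t
        * (\<integral>\<omega>. lambda_norm gradF lam (ybar \<beta> x0 D s J n t \<omega>) \<partial>M)) \<le> B + \<Phi> n / (radius * T)"
      unfolding B_def \<Phi>_def add_divide_distrib by linarith
  qed
  also have "\<dots> = real N * B + (\<Sum>n = 1..N. \<Phi> n) / (radius * T)"
    by (simp add: sum.distrib sum_divide_distrib)
  also have "\<dots> \<le> real N * B + real T * \<Delta> / (radius * T)"
    using divide_right_mono[OF sum_epoch_decrease_le, of "radius * T"] radius_pos T0
    unfolding \<Phi>_def \<Delta>_def by (simp add: zero_le_mult_iff)
  finally have "(1 / real N) * (\<Sum>n = 1..N. \<Sum>t = 1..T.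
      tau_prob \<beta> T t * (\<integral>\<omega>. lambda_norm gradF lam (ybar \<beta> x0 D s J n t \<omega>) \<partial>M))
    \<le> B + \<Delta> / (real N * radius)"
    using N0 T0 radius_pos by (simp add: field_simps)
  then show ?thesis unfolding B_def \<Delta>_def .
qed

end

theorem corollary3:
  fixes F :: "'a::euclidean_space \<Rightarrow> real" and gradF :: "'a \<Rightarrow> 'a"
    and G \<sigma> lam \<epsilon> :: real and x0 :: 'a and N T :: nat
    and M :: "'b measure"
    and D :: "nat \<Rightarrow> nat \<Rightarrow> 'b \<Rightarrow> 'a" and s :: "nat \<Rightarrow> nat \<Rightarrow> 'b \<Rightarrow> real"
    and g :: "nat \<Rightarrow> nat \<Rightarrow> 'b \<Rightarrow> 'a" and J :: "nat \<Rightarrow> 'b \<Rightarrow> nat"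
    and Fpre Fy :: "nat \<Rightarrow> nat \<Rightarrow> 'b measure"
  defines "\<beta> \<equiv> 1 - (\<epsilon> / (7 * (G + \<sigma>)))\<^sup>2"
    and "\<mu> \<equiv> 2 * sqrt lam * sqrt \<epsilon>"
    and "\<Delta>F \<equiv> F x0 - Inf (range F)"
  assumes grad: "\<And>x. (F has_derivative (\<lambda>h. gradF x \<bullet> h)) (at x)"
    and integral_identity: "\<And>x w. ((\<lambda>t. gradF (w + t *\<^sub>R (x - w)) \<bullet> (x - w)) has_integral (F x - F w)) {0..1}"
    and grad_bound: "\<And>x. norm (gradF x) \<le> G"
    and sigma_nonneg: "\<sigma> \<ge> 0"
    and lam_pos: "lam > 0" and eps_pos: "\<epsilon> > 0" and eps_le: "\<epsilon> \<le> 7 / 2 * (G + \<sigma>)"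
    and F_bdd: "bdd_below (range F)"
    and N_pos: "N \<ge> 1"
    and N_ge: "real N \<ge> 4 * \<Delta>F * sqrt lam * \<epsilon> powr (-3/2)"
    and T_ge: "real T \<ge> 49 * (G + \<sigma>)\<^sup>2 * \<epsilon> powr (-2)"
    \<comment> \<open>probability space and information structure (filtration)\<close>
    and M_prob: "prob_space M"
    and sub_pre: "\<And>n t. n \<in> {1..N} \<Longrightarrow> t \<in> {1..Suc T} \<Longrightarrow> subalgebra M (Fpre n t)"
    and sub_y: "\<And>n t. n \<in> {1..N} \<Longrightarrow> t \<in> {1..T} \<Longrightarrow> subalgebra M (Fy n t)"
    and mono_pre_y: "\<And>n t. n \<in> {1..N} \<Longrightarrow> t \<in> {1..T} \<Longrightarrow> sets (Fpre n t) \<subseteq> sets (Fy n t)"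
    and mono_y_pre: "\<And>n t. n \<in> {1..N} \<Longrightarrow> t \<in> {1..T} \<Longrightarrow> sets (Fy n t) \<subseteq> sets (Fpre n (Suc t))"
    and mono_epoch: "\<And>n. n \<in> {1..<N} \<Longrightarrow> sets (Fpre n (Suc T)) \<subseteq> sets (Fpre (Suc n) 1)"
    \<comment> \<open>online learner outputs: adapted, square integrable\<close>
    and D_meas: "\<And>n t. n \<in> {1..N} \<Longrightarrow> t \<in> {1..T} \<Longrightarrow> D n t \<in> borel_measurable (Fpre n t)"
    and D_sq_int: "\<And>n t. n \<in> {1..N} \<Longrightarrow> t \<in> {1..T} \<Longrightarrow> integrable M (\<lambda>\<omega>. (norm (D n t \<omega>))\<^sup>2)"
    \<comment> \<open>random scaling s ~ Unif[0,1], independent of the past\<close>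
    and s_meas: "\<And>n t. n \<in> {1..N} \<Longrightarrow> t \<in> {1..T} \<Longrightarrow> s n t \<in> borel_measurable (Fy n t)"
    and s_unif: "\<And>n t. n \<in> {1..N} \<Longrightarrow> t \<in> {1..T} \<Longrightarrow>
                   distr M borel (s n t) = uniform_measure lborel {0..1}"
    and s_indep: "\<And>n t. n \<in> {1..N} \<Longrightarrow> t \<in> {1..T} \<Longrightarrow>
                   prob_space.indep_set M (sets (Fpre n t)) (sets (vimage_algebra (space M) (s n t) borel))"
    \<comment> \<open>stochastic gradient oracle queried at y\<close>
    and g_meas: "\<And>n t. n \<in> {1..N} \<Longrightarrow> t \<in> {1..T} \<Longrightarrow> g n t \<in> borel_measurable (Fpre n (Suc t))"
    and g_int: "\<And>n t. n \<in> {1..N} \<Longrightarrow> t \<in> {1..T} \<Longrightarrow> integrable M (g n t)"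
    and g_unbiased: "\<And>n t b. n \<in> {1..N} \<Longrightarrow> t \<in> {1..T} \<Longrightarrow> b \<in> Basis \<Longrightarrow>
                   AE \<omega> in M. real_cond_exp M (Fy n t) (\<lambda>\<omega>. g n t \<omega> \<bullet> b) \<omega>
                                = gradF (iter_y x0 D s J n t \<omega>) \<bullet> b"
    and g_var_int: "\<And>n t. n \<in> {1..N} \<Longrightarrow> t \<in> {1..T} \<Longrightarrow>
                   integrable M (\<lambda>\<omega>. (norm (g n t \<omega> - gradF (iter_y x0 D s J n t \<omega>)))\<^sup>2)"
    and g_var: "\<And>n t. n \<in> {1..N} \<Longrightarrow> t \<in> {1..T} \<Longrightarrow>
                   AE \<omega> in M. real_cond_exp M (Fy n t)
                     (\<lambda>\<omega>. (norm (g n t \<omega> - gradF (iter_y x0 D s J n t \<omega>)))\<^sup>2) \<omega> \<le> \<sigma>\<^sup>2"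
    \<comment> \<open>next anchor: uniform index J n in {1..T}, independent of the epoch\<close>
    and J_meas: "\<And>n. n \<in> {1..<N} \<Longrightarrow> J n \<in> measurable (Fpre (Suc n) 1) (count_space UNIV)"
    and J_unif: "\<And>n. n \<in> {1..<N} \<Longrightarrow>
                   distr M (count_space UNIV) (J n) = uniform_measure (count_space UNIV) {1..T}"
    and J_indep: "\<And>n. n \<in> {1..<N} \<Longrightarrow>
                   prob_space.indep_set M (sets (Fpre n (Suc T)))
                     (sets (vimage_algebra (space M) (J n) (count_space UNIV)))"
    \<comment> \<open>regret guarantee of the learner in every epoch, for all (possibly random) comparators\<close>
    and regret_bound: "\<And>n t u. n \<in> {1..N} \<Longrightarrow> t \<in> {1..T} \<Longrightarrow> u \<in> borel_measurable M \<Longrightarrow>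
                   integrable M (\<lambda>\<omega>. (norm (u \<omega>))\<^sup>2) \<Longrightarrow>
                   (\<integral>\<omega>. regret \<beta> \<mu> g D n t u \<omega> \<partial>M)
                     \<le> (\<integral>\<omega>. 2 * norm (u \<omega>) * (G + \<sigma>) / (\<beta> * sqrt (1 - \<beta>))
                              + \<mu> / 2 * (norm (u \<omega>))\<^sup>2 \<partial>M)"
  shows "(1 / real N) * (\<Sum>n = 1..N. \<Sum>t = 1..T.
            tau_prob \<beta> T t * (\<integral>\<omega>. lambda_norm gradF lam (ybar \<beta> x0 D s J n t \<omega>) \<partial>M))
         \<le> 4 * \<epsilon>"
proof -
  interpret anchoring_scheme F gradF G \<sigma> lam \<epsilon> x0 N T M D s g J Fpre Fy \<beta> \<mu>
    by (rule anchoring_scheme.intro; fact assms \<beta>_def[THEN meta_eq_to_obj_eq] \<mu>_def[THEN meta_eq_to_obj_eq])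
  have "(1 / real N) * (\<Sum>n = 1..N. \<Sum>t = 1..T.
            tau_prob \<beta> T t * (\<integral>\<omega>. lambda_norm gradF lam (ybar \<beta> x0 D s J n t \<omega>) \<partial>M))
        \<le> (\<epsilon> + 16/21 * \<epsilon> + \<epsilon> / 2) + 2/7 * \<epsilon> + \<epsilon> / 4"
    using average_bound bias_term_le noise_term_le decrease_term_le[OF N_ge[unfolded \<Delta>F_def]]
    by linarith
  then show ?thesis
    using eps_pos by linarith
qed

end
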